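(* $L_{KG}$ can be verified by a 2ADfA with bounded error $\epsilon\in(0,1/2)$. Moreover, the protocol achieves perfect completeness.
   Context: The Knapsack-game language is $L_{KG}=\{ S\, \forall(a_1,b_1)\, \exists(e_1,f_1)\, \cdots \, \forall(a_n,b_n)\, \exists(e_n,f_n) \}$, where $S$ and each $a_i,b_i,e_i,f_i$ are natural numbers given in binary, and for every $x\in \prod_{i=1}^{n}\{a_i,b_i\}$ there exists $y\in \prod_{i=1}^{n}\{e_i,f_i\}$ with $S=\sum_{i=1}^{n}(x_i+y_i)$. An affine state of an $m$-state affine register is a vector $v\in\mathbb{R}^m$ whose entries sum to $1$; affine operators are real matrices whose columns each sum to $1$; weighting observes basis state $e_j$ with probability $|v_j|/\|v\|_1$. A 2ADfA is a two-way deterministic finite automaton on the read-only input $¢ w\$$ (left end-marker ¢, right end-marker \$) equipped with finitely many affine registers (with rational transition matrices), each updated by an affine operator or weighted at each step, with the deterministic state and head move then depending on state, symbol and weighting outcomes; it halts upon entering an accepting or rejecting state. The 2ADfA is the verifier in an Arthur–Merlin proof system (public coins: deterministic states, head moves and weighting outcomes are revealed to the all-powerful prover). Verification with error $\epsilon$ (rational): some prover makes every $w\in L$ accepted with probability at least $1-\epsilon$, and for every $w\notin L$ and every prover, $w$ is rejected with probability at least $1-\epsilon$. Perfect completeness means every $w\in L$ is accepted with probability $1$. *)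

theory Defs
  imports Complex_Main
begin

datatype kg_sym = B0 | B1 | All | Ex | LP | RP | Cm

definition bits_val :: "bool list \<Rightarrow> nat" where
  "bits_val bs = foldl (\<lambda>acc b. 2 * acc + (if b then 1 else 0)) 0 bs"

definition enc_bits :: "bool list \<Rightarrow> kg_sym list" where
  "enc_bits bs = map (\<lambda>b. if b then B1 else B0) bs"

definition enc_pair :: "bool list \<Rightarrow> bool list \<Rightarrow> kg_sym list" where
  "enc_pair a b = [LP] @ enc_bits a @ [Cm] @ enc_bits b @ [RP]"

definition enc_block :: "bool list \<times> bool list \<times> bool list \<times> bool list \<Rightarrow> kg_sym list" where
  "enc_block blk = (case blk of (a, b, e, f) \<Rightarrow> [All] @ enc_pair a b @ [Ex] @ enc_pair e f)"

definition kg_true :: "bool list \<Rightarrow> (bool list \<times> bool list \<times> bool list \<times> bool list) list \<Rightarrow> bool" where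
  "kg_true S blocks =
     (\<forall>x :: nat \<Rightarrow> bool. \<exists>y :: nat \<Rightarrow> bool.
        bits_val S = (\<Sum>i<length blocks. case blocks ! i of (a, b, e, f) \<Rightarrow>
            (if x i then bits_val a else bits_val b) + (if y i then bits_val e else bits_val f)))"

definition L_KG :: "kg_sym list set" where
  "L_KG = {enc_bits S @ concat (map enc_block blocks) | S blocks.
            S \<noteq> [] \<and> blocks \<noteq> [] \<and>
            (\<forall>(a, b, e, f) \<in> set blocks. a \<noteq> [] \<and> b \<noteq> [] \<and> e \<noteq> [] \<and> f \<noteq> []) \<and>
            kg_true S blocks}"

text \<open>Tape symbols of the read-only tape with end-markers (LEnd = cent, REnd = dollar).\<close>
datatype 'a tsym = LEnd | REnd | Sym 'a

definition tape :: "'a list \<Rightarrow> nat \<Rightarrow> 'a tsym" where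
  "tape w pos = (if pos = 0 then LEnd else if pos \<le> length w then Sym (w ! (pos - 1)) else REnd)"

text \<open>Action on one affine register: apply a rational affine operator (matrix indexed
  row, column) or weight (measure) it.\<close>
datatype ract = Op "nat \<Rightarrow> nat \<Rightarrow> rat" | Weigh

text \<open>Deterministic states, prover symbols and registers are drawn from nat, restricted
  to finite sets / a finite number of registers. In a step, in state q reading symbol s and receiving
  prover symbol g, register r performs act q s g r; then the new state and head move
  (-1, 0, +1) are trans q s g ou, where ou r is the weighting outcome of register r
  (ou r = 0 for registers not weighted).\<close>
record 'a adfa =
  states :: "nat set"
  init :: nat
  accs :: "nat set"
  rejs :: "nat set"
  palph :: "nat set"
  nregs :: nat
  dim :: "nat \<Rightarrow> nat"
  v0 :: "nat \<Rightarrow> nat \<Rightarrow> rat"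
  act :: "nat \<Rightarrow> 'a tsym \<Rightarrow> nat \<Rightarrow> nat \<Rightarrow> ract"
  trans :: "nat \<Rightarrow> 'a tsym \<Rightarrow> nat \<Rightarrow> (nat \<Rightarrow> nat) \<Rightarrow> nat \<times> int"

definition wf_adfa :: "'a adfa \<Rightarrow> bool" where
  "wf_adfa M \<longleftrightarrow>
     finite (states M) \<and> init M \<in> states M \<and> accs M \<subseteq> states M \<and> rejs M \<subseteq> states M \<and>
     accs M \<inter> rejs M = {} \<and> finite (palph M) \<and> palph M \<noteq> {} \<and>
     (\<forall>r < nregs M. dim M r \<ge> 1 \<and> (\<Sum>i<dim M r. v0 M r i) = 1) \<and>
     (\<forall>q s g r Mx. q \<in> states M \<longrightarrow> g \<in> palph M \<longrightarrow> r < nregs M \<longrightarrow> act M q s g r = Op Mx \<longrightarrow>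
        (\<forall>j < dim M r. (\<Sum>i<dim M r. Mx i j) = 1)) \<and>
     (\<forall>q s g ou. q \<in> states M \<longrightarrow> g \<in> palph M \<longrightarrow>
        fst (trans M q s g ou) \<in> states M \<and> snd (trans M q s g ou) \<in> {-1, 0, 1} \<and>
        (s = LEnd \<longrightarrow> snd (trans M q s g ou) \<noteq> -1) \<and>
        (s = REnd \<longrightarrow> snd (trans M q s g ou) \<noteq> 1))"

definition weighed :: "'a adfa \<Rightarrow> nat \<Rightarrow> 'a tsym \<Rightarrow> nat \<Rightarrow> nat set" where
  "weighed M q s g = {r. r < nregs M \<and> act M q s g r = Weigh}"

definition outs :: "'a adfa \<Rightarrow> nat \<Rightarrow> 'a tsym \<Rightarrow> nat \<Rightarrow> (nat \<Rightarrow> nat) set" where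
  "outs M q s g = {ou. \<forall>r. (r \<in> weighed M q s g \<longrightarrow> ou r < dim M r) \<and>
                          (r \<notin> weighed M q s g \<longrightarrow> ou r = 0)}"

definition wprob :: "'a adfa \<Rightarrow> nat \<Rightarrow> 'a tsym \<Rightarrow> nat \<Rightarrow> (nat \<Rightarrow> nat \<Rightarrow> real) \<Rightarrow> (nat \<Rightarrow> nat) \<Rightarrow> real" where
  "wprob M q s g v ou = (\<Prod>r\<in>weighed M q s g. \<bar>v r (ou r)\<bar> / (\<Sum>i<dim M r. \<bar>v r i\<bar>))"

definition upd :: "'a adfa \<Rightarrow> nat \<Rightarrow> 'a tsym \<Rightarrow> nat \<Rightarrow> (nat \<Rightarrow> nat \<Rightarrow> real) \<Rightarrow> (nat \<Rightarrow> nat) \<Rightarrow> (nat \<Rightarrow> nat \<Rightarrow> real)" where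
  "upd M q s g v ou = (\<lambda>r. if r < nregs M then
        (case act M q s g r of
           Weigh \<Rightarrow> (\<lambda>i. if i = ou r then 1 else 0)
         | Op Mx \<Rightarrow> (\<lambda>i. \<Sum>j<dim M r. real_of_rat (Mx i j) * v r j))
      else v r)"

text \<open>Public information revealed to the prover after each step: new deterministic state,
  new head position, weighting outcomes. A prover maps the history to its next symbol.\<close>
type_synonym obs = "nat \<times> nat \<times> (nat \<Rightarrow> nat)"
type_synonym prover = "obs list \<Rightarrow> nat"

definition prover_ok :: "'a adfa \<Rightarrow> prover \<Rightarrow> bool" where
  "prover_ok M P \<longleftrightarrow> (\<forall>h. P h \<in> palph M)"

text \<open>Probability of halting in a state of T within n steps.\<close>
primrec reach :: "'a adfa \<Rightarrow> 'a list \<Rightarrow> prover \<Rightarrow> nat set \<Rightarrow> nat \<Rightarrow> nat \<Rightarrow> nat \<Rightarrow>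
                  (nat \<Rightarrow> nat \<Rightarrow> real) \<Rightarrow> obs list \<Rightarrow> real" where
  "reach M w P T 0 q pos v h = 0"
| "reach M w P T (Suc n) q pos v h =
     (if q \<in> accs M \<union> rejs M then (if q \<in> T then 1 else 0)
      else (let s = tape w pos; g = P h in
        \<Sum>ou\<in>outs M q s g. wprob M q s g v ou *
           (case trans M q s g ou of (q', d) \<Rightarrow>
              reach M w P T n q' (nat (int pos + d)) (upd M q s g v ou)
                    (h @ [(q', nat (int pos + d), ou)]))))"

definition init_regs :: "'a adfa \<Rightarrow> nat \<Rightarrow> nat \<Rightarrow> real" where
  "init_regs M = (\<lambda>r i. real_of_rat (v0 M r i))"

definition acc_prob :: "'a adfa \<Rightarrow> 'a list \<Rightarrow> prover \<Rightarrow> real" where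
  "acc_prob M w P = (SUP n. reach M w P (accs M) n (init M) 0 (init_regs M) [])"

definition rej_prob :: "'a adfa \<Rightarrow> 'a list \<Rightarrow> prover \<Rightarrow> real" where
  "rej_prob M w P = (SUP n. reach M w P (rejs M) n (init M) 0 (init_regs M) [])"

definition verifies_with_error :: "'a adfa \<Rightarrow> 'a list set \<Rightarrow> rat \<Rightarrow> bool" where
  "verifies_with_error M L eps \<longleftrightarrow> wf_adfa M \<and>
     (\<forall>w\<in>L. \<exists>P. prover_ok M P \<and> acc_prob M w P \<ge> 1 - real_of_rat eps) \<and>
     (\<forall>w. w \<notin> L \<longrightarrow> (\<forall>P. prover_ok M P \<longrightarrow> rej_prob M w P \<ge> 1 - real_of_rat eps))"

definition perfect_completeness :: "'a adfa \<Rightarrow> 'a list set \<Rightarrow> bool" where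
  "perfect_completeness M L \<longleftrightarrow> (\<forall>w\<in>L. \<exists>P. prover_ok M P \<and> acc_prob M w P = 1)"

end

theory Submission
  imports Defs "HOL-Library.Countable"
begin

(* The verifier works in rounds. Sweeping right it checks the syntax, loads S into an affine
   counter c and, at every universal block, weighs a uniform coin register to pick x_i in
   {a_i, b_i} and subtracts it from c. Sweeping left it asks the prover for y_i in {e_i, f_i}
   at every existential block and subtracts it as well. The counter register then holds
   (c, -c, 0, 0, 1); weighing it rejects with probability 2|c|/(2|c| + 1), which is at least 2/3
   when c is a nonzero integer. If the test passes, a budget register holding (z, -z, 0, 0, 1),
   z = K 2^m for m blocks, is weighed: the verifier accepts with probability 1/(2z + 1) and
   restarts otherwise.

   For w in L_KG the prover can answer so that c = 0 in every round, so rejection never happens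
   and acceptance has probability 1. For a false instance some x defeats every answer; it is
   drawn with probability 2^-m, so a round rejects with probability at least (2/3) 2^-m but
   accepts with probability at most 1/(2K 2^m + 1), and over all rounds the rejection probability
   is at least 1 - 3/(4K). Malformed inputs are rejected during the first sweep. *)

section \<open>Averages and iterated bounds\<close>

lemma weighted_avg_le_1:
  fixes u :: "nat \<Rightarrow> real"
  assumes "\<And>j. j < d \<Longrightarrow> x j \<le> 1"
  shows "(\<Sum>j<d. (\<bar>u j\<bar> / (\<Sum>i<d. \<bar>u i\<bar>)) * x j) \<le> 1"
proof -
  have "(\<Sum>j<d. (\<bar>u j\<bar> / (\<Sum>i<d. \<bar>u i\<bar>)) * x j) \<le> (\<Sum>j<d. (\<bar>u j\<bar> / (\<Sum>i<d. \<bar>u i\<bar>)))"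
  proof (intro sum_mono)
    fix j assume j: "j \<in> {..<d}"
    have "\<bar>u j\<bar> * x j \<le> \<bar>u j\<bar>" using assms[of j] j by (simp add: mult_left_le)
    then have "\<bar>u j\<bar> * x j / (\<Sum>i<d. \<bar>u i\<bar>) \<le> \<bar>u j\<bar> / (\<Sum>i<d. \<bar>u i\<bar>)"
      by (intro divide_right_mono) (auto intro: sum_nonneg)
    then show "\<bar>u j\<bar> / (\<Sum>i<d. \<bar>u i\<bar>) * x j \<le> \<bar>u j\<bar> / (\<Sum>i<d. \<bar>u i\<bar>)" by simp
  qed
  also have "\<dots> \<le> 1"
  proof (cases "(\<Sum>i<d. \<bar>u i\<bar>) = 0")
    case True then show ?thesis by simp
  next
    case False
    have "(\<Sum>j<d. \<bar>u j\<bar> / (\<Sum>i<d. \<bar>u i\<bar>)) = (\<Sum>j<d. \<bar>u j\<bar>) / (\<Sum>i<d. \<bar>u i\<bar>)"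
      by (rule sum_divide_distrib[symmetric])
    also have "\<dots> = 1" using False by simp
    finally show ?thesis by simp
  qed
  finally show ?thesis .
qed

fun coin_avg :: "nat \<Rightarrow> (bool list \<Rightarrow> real) \<Rightarrow> real" where
  "coin_avg 0 F = F []"
| "coin_avg (Suc m) F = (coin_avg m (\<lambda>xs. F (True # xs)) + coin_avg m (\<lambda>xs. F (False # xs))) / 2"

lemma coin_avg_ge: "(\<forall>xs. length xs = m \<longrightarrow> L \<le> F xs) \<Longrightarrow> L \<le> coin_avg m F"
proof (induction m arbitrary: F)
  case 0 then show ?case by simp
next
  case (Suc m)
  have "L \<le> coin_avg m (\<lambda>xs. F (True # xs))" "L \<le> coin_avg m (\<lambda>xs. F (False # xs))"
    using Suc.IH Suc.prems by auto
  then show ?case by simp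
qed

lemma coin_avg_ge_bad: "length xs0 = m \<Longrightarrow> (\<forall>xs. length xs = m \<longrightarrow> Lg \<le> F xs) \<Longrightarrow> Lb \<le> F xs0 \<Longrightarrow> Lg \<le> Lb \<Longrightarrow>
   Lg + (Lb - Lg) / 2 ^ m \<le> coin_avg m F"
proof (induction m arbitrary: F xs0)
  case 0 then show ?case by simp
next
  case (Suc m)
  obtain b xs1 where xs0: "xs0 = b # xs1" "length xs1 = m" using Suc.prems(1) by (cases xs0) auto
  have good: "Lg + (Lb - Lg) / 2 ^ m \<le> coin_avg m (\<lambda>xs. F (b # xs))"
    using Suc.IH[of xs1 "\<lambda>xs. F (b # xs)"] xs0 Suc.prems by auto
  have other: "Lg \<le> coin_avg m (\<lambda>xs. F ((\<not> b) # xs))"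
    using coin_avg_ge[of m Lg "\<lambda>xs. F ((\<not> b) # xs)"] Suc.prems by auto
  have "Lg + (Lb - Lg) / 2 ^ Suc m = ((Lg + (Lb - Lg) / 2 ^ m) + Lg) / 2" by (simp add: field_simps)
  also have "\<dots> \<le> (coin_avg m (\<lambda>xs. F (b # xs)) + coin_avg m (\<lambda>xs. F ((\<not> b) # xs))) / 2"
    by (intro divide_right_mono add_mono good other) simp
  also have "\<dots> = coin_avg (Suc m) F" by (cases b) simp_all
  finally show ?case .
qed

lemma iterate_affine_bound:
  fixes holds :: "nat \<Rightarrow> real \<Rightarrow> bool" and r \<beta> t :: real
  assumes "holds 0 0" "0 \<le> \<beta>" "\<beta> \<le> 1" "0 \<le> t" "r + \<beta> * t = t"
    and step: "\<And>n B. 0 \<le> B \<Longrightarrow> B \<le> t \<Longrightarrow> holds n B \<Longrightarrow> holds (n + N) (r + \<beta> * B)"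
  shows "holds (k * N) (t - t * \<beta> ^ k)"
proof (induction k)
  case 0
  then show ?case using assms(1) by simp
next
  case (Suc k)
  have "\<beta> ^ k \<le> 1" using assms(2,3) by (rule power_le_one)
  then have "0 \<le> t - t * \<beta> ^ k" "t - t * \<beta> ^ k \<le> t"
    using assms(2,4) by (simp_all add: mult_left_le)
  then have "holds (k * N + N) (r + \<beta> * (t - t * \<beta> ^ k))" using Suc by (rule step)
  moreover have "r + \<beta> * (t - t * \<beta> ^ k) = t - t * \<beta> ^ Suc k"
    using assms(5) by (simp add: algebra_simps)
  ultimately show ?case by (simp add: add.commute)
qed

lemma le_SUP_of_geometric_bounds:
  fixes f :: "nat \<Rightarrow> real"
  assumes "\<And>k. t - t * \<beta> ^ k \<le> f (g k)" "bdd_above (range f)" "0 \<le> \<beta>" "\<beta> < 1"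
  shows "t \<le> (SUP n. f n)"
proof (rule LIMSEQ_le_const2)
  show "(\<lambda>k. t - t * \<beta> ^ k) \<longlonglongrightarrow> t"
    using LIMSEQ_power_zero[of \<beta>] assms(3,4) by (auto intro!: tendsto_eq_intros)
  show "\<exists>N. \<forall>k\<ge>N. t - t * \<beta> ^ k \<le> (SUP n. f n)"
    using assms(1,2) by (blast intro: cSUP_upper2)
qed

lemma abs_ge_1_of_nat_diff: "(c::real) = real a - real b - real d \<Longrightarrow> c \<noteq> 0 \<Longrightarrow> \<bar>c\<bar> \<ge> 1"
proof -
  assume c: "c = real a - real b - real d" "c \<noteq> 0"
  have "c = real_of_int (int a - int b - int d)" using c by simp
  moreover have "int a - int b - int d \<noteq> 0" using c by auto
  then have "\<bar>int a - int b - int d\<bar> \<ge> 1" by linarith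
  then have "real_of_int \<bar>int a - int b - int d\<bar> \<ge> 1" by linarith
  ultimately show ?thesis by simp
qed

section \<open>The verifier\<close>

(* States of the syntax check: S0/S1 before/inside S; X1/X2 before/inside the number
   X in {a, b, e, f}; ALP, EEx, ELP before the corresponding symbol; BlkEnd after a block. *)
datatype pstate = S0 | S1 | ALP | Aa1 | Aa2 | Ab1 | Ab2 | EEx | ELP | Ee1 | Ee2 | Ef1 | Ef2 | BlkEnd
(* Fwd d x: right sweep in parse state d with current coin x (True selects a_i).
   BwdF1/BwdF/BwdE y: left sweep through f_i/e_i with the prover's answer y (True selects e_i). *)
datatype vstate = Start | Fwd pstate bool | BwdNext | BwdF1 bool | BwdF bool | BwdE bool | BwdEx | BwdRP | BwdAB | BwdAll | BwdS
  | AccCoin | Acc | Rej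

instance pstate :: countable by countable_datatype
instance vstate :: countable by countable_datatype

lemma UNIV_pstate: "(UNIV :: pstate set) = {S0, S1, ALP, Aa1, Aa2, Ab1, Ab2, EEx, ELP, Ee1, Ee2, Ef1, Ef2, BlkEnd}"
  by (auto intro: pstate.exhaust)

instance pstate :: finite by standard (simp add: UNIV_pstate)

lemma UNIV_vstate: "(UNIV :: vstate set) = {Start, BwdNext, BwdEx, BwdRP, BwdAB, BwdAll, BwdS, AccCoin, Acc, Rej}
   \<union> (\<lambda>(d,x). Fwd d x) ` UNIV \<union> range BwdF1 \<union> range BwdF \<union> range BwdE"
  by (rule set_eqI, case_tac x) auto

lemma finite_vstate: "finite (UNIV :: vstate set)"
  by (simp add: UNIV_vstate)

definition is_bit :: "kg_sym \<Rightarrow> bool" where "is_bit s \<longleftrightarrow> s = B0 \<or> s = B1"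
definition bit_rat :: "kg_sym \<Rightarrow> rat" where "bit_rat s = (if s = B1 then 1 else 0)"

fun parse_step :: "pstate \<Rightarrow> kg_sym \<Rightarrow> pstate option" where
  "parse_step S0 s = (if is_bit s then Some S1 else None)"
| "parse_step S1 s = (if is_bit s then Some S1 else if s = All then Some ALP else None)"
| "parse_step ALP s = (if s = LP then Some Aa1 else None)"
| "parse_step Aa1 s = (if is_bit s then Some Aa2 else None)"
| "parse_step Aa2 s = (if is_bit s then Some Aa2 else if s = Cm then Some Ab1 else None)"
| "parse_step Ab1 s = (if is_bit s then Some Ab2 else None)"
| "parse_step Ab2 s = (if is_bit s then Some Ab2 else if s = RP then Some EEx else None)"
| "parse_step EEx s = (if s = Ex then Some ELP else None)"
| "parse_step ELP s = (if s = LP then Some Ee1 else None)"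
| "parse_step Ee1 s = (if is_bit s then Some Ee2 else None)"
| "parse_step Ee2 s = (if is_bit s then Some Ee2 else if s = Cm then Some Ef1 else None)"
| "parse_step Ef1 s = (if is_bit s then Some Ef2 else None)"
| "parse_step Ef2 s = (if is_bit s then Some Ef2 else if s = RP then Some BlkEnd else None)"
| "parse_step BlkEnd s = (if s = All then Some ALP else None)"

fun flips_coin :: "vstate \<Rightarrow> kg_sym \<Rightarrow> bool" where
  "flips_coin (Fwd d x) s = ((d = S1 \<or> d = BlkEnd) \<and> s = All)"
| "flips_coin _ s = False"

fun vstep :: "vstate \<Rightarrow> kg_sym tsym \<Rightarrow> nat \<Rightarrow> (nat \<Rightarrow> nat) \<Rightarrow> vstate \<times> int" where
  "vstep Start LEnd g ou = (Fwd S0 False, 1)"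
| "vstep (Fwd d x) (Sym s) g ou = (case parse_step d s of None \<Rightarrow> (Rej, 0)
      | Some d' \<Rightarrow> (Fwd d' (if flips_coin (Fwd d x) s then ou 0 = 0 else x), 1))"
| "vstep (Fwd d x) REnd g ou = (if d = BlkEnd then (BwdNext, -1) else (Rej, 0))"
| "vstep BwdNext (Sym s) g ou = (if s = RP then (BwdF1 (g = 0), -1) else if is_bit s then (BwdS, -1) else (Rej, 0))"
| "vstep (BwdF1 y) (Sym s) g ou = (if is_bit s then (BwdF y, -1) else (Rej, 0))"
| "vstep (BwdF y) (Sym s) g ou = (if is_bit s then (BwdF y, -1) else if s = Cm then (BwdE y, -1) else (Rej, 0))"
| "vstep (BwdE y) (Sym s) g ou = (if is_bit s then (BwdE y, -1) else if s = LP then (BwdEx, -1) else (Rej, 0))"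
| "vstep BwdEx (Sym s) g ou = (if s = Ex then (BwdRP, -1) else (Rej, 0))"
| "vstep BwdRP (Sym s) g ou = (if s = RP then (BwdAB, -1) else (Rej, 0))"
| "vstep BwdAB (Sym s) g ou = (if is_bit s \<or> s = Cm then (BwdAB, -1) else if s = LP then (BwdAll, -1) else (Rej, 0))"
| "vstep BwdAll (Sym s) g ou = (if s = All then (BwdNext, -1) else (Rej, 0))"
| "vstep BwdS (Sym s) g ou = (if is_bit s then (BwdS, -1) else (Rej, 0))"
| "vstep BwdS LEnd g ou = (if ou 1 = 4 then (AccCoin, 0) else (Rej, 0))"
| "vstep AccCoin LEnd g ou = (if ou 2 = 4 then (Acc, 0) else (Start, 0))"
| "vstep _ _ _ _ = (Rej, 0)"

(* (a1, a2, a3, b1, b2, b3) stands for the map (c, p) \<mapsto> (a1 c + a2 p + a3, b1 c + b2 p + b3) on the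
   counter. Sweeping right, p accumulates the number being read; sweeping left, it is the place
   value of the next digit. *)
type_synonym aff_coeffs = "rat \<times> rat \<times> rat \<times> rat \<times> rat \<times> rat"

definition aff_id :: aff_coeffs where "aff_id = (1, 0, 0, 0, 1, 0)"

fun counter_coeffs :: "vstate \<Rightarrow> kg_sym \<Rightarrow> aff_coeffs" where
  "counter_coeffs (Fwd d x) s = (if (d = S0 \<or> d = S1) \<and> is_bit s then (2, 0, bit_rat s, 0, 1, 0)
    else if (d = Aa1 \<or> d = Aa2) \<and> is_bit s \<and> x then (1, 0, 0, 0, 2, bit_rat s)
    else if d = Aa2 \<and> s = Cm \<and> x then (1, -1, 0, 0, 0, 0)
    else if (d = Ab1 \<or> d = Ab2) \<and> is_bit s \<and> \<not> x then (1, 0, 0, 0, 2, bit_rat s)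
    else if d = Ab2 \<and> s = RP \<and> \<not> x then (1, -1, 0, 0, 0, 0)
    else aff_id)"
| "counter_coeffs BwdNext s = (if s = RP then (1, 0, 0, 0, 0, 1) else if is_bit s then (1, 0, 0, 0, 0, 0) else aff_id)"
| "counter_coeffs (BwdF1 y) s = (if is_bit s \<and> \<not> y then (1, - bit_rat s, 0, 0, 2, 0) else aff_id)"
| "counter_coeffs (BwdF y) s = (if is_bit s \<and> \<not> y then (1, - bit_rat s, 0, 0, 2, 0)
     else if s = Cm then (1, 0, 0, 0, 0, 1) else aff_id)"
| "counter_coeffs (BwdE y) s = (if is_bit s \<and> y then (1, - bit_rat s, 0, 0, 2, 0) else aff_id)"
| "counter_coeffs _ s = aff_id"

(* The affine operator realising aff_coeffs on the encoding (c, -c, p, -p, 1); the last row makes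
   every column sum to 1. *)
definition aff_matrix :: "aff_coeffs \<Rightarrow> nat \<Rightarrow> nat \<Rightarrow> rat" where
  "aff_matrix t i j = (case t of (a1, a2, a3, b1, b2, b3) \<Rightarrow>
     if i < 5 \<and> j < 5 then
       [[a1, 0, a2, 0, a3], [0, a1, 0, a2, -a3], [b1, 0, b2, 0, b3], [0, b1, 0, b2, -b3],
        [1-a1-b1, 1-a1-b1, 1-a2-b2, 1-a2-b2, 1]] ! i ! j else 0)"

definition uniform_matrix :: "nat \<Rightarrow> nat \<Rightarrow> rat" where "uniform_matrix i j = (if i < 2 \<and> j < 2 then 1/2 else 0)"
definition const_matrix :: "(nat \<Rightarrow> rat) \<Rightarrow> nat \<Rightarrow> nat \<Rightarrow> rat" where "const_matrix u i j = (if i < 5 then u i else 0)"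
definition unit4 :: "nat \<Rightarrow> rat" where "unit4 i = (if i = 4 then 1 else 0)"
definition budget_init :: "nat \<Rightarrow> nat \<Rightarrow> rat" where
  "budget_init K i = (if i = 0 then of_nat K else if i = 1 then - of_nat K else if i = 4 then 1 else 0)"

(* Register 0 (dimension 2) is the coin, register 1 the counter (c, p), register 2 the budget z,
   which is doubled at every coin flip. *)
definition vacts :: "nat \<Rightarrow> vstate \<Rightarrow> kg_sym tsym \<Rightarrow> nat \<Rightarrow> nat \<Rightarrow> ract" where
  "vacts K q s g r =
    (if r = 0 then (case s of Sym a \<Rightarrow> if flips_coin q a then Weigh else Op uniform_matrix | _ \<Rightarrow> Op uniform_matrix)
     else if r = 1 then (if q = Start then Op (const_matrix unit4) else if q = BwdS \<and> s = LEnd then Weigh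
        else (case s of Sym a \<Rightarrow> Op (aff_matrix (counter_coeffs q a)) | _ \<Rightarrow> Op (aff_matrix aff_id)))
     else if r = 2 then (if q = Start then Op (const_matrix (budget_init K)) else if q = AccCoin \<and> s = LEnd then Weigh
        else (case s of Sym a \<Rightarrow> if flips_coin q a then Op (aff_matrix (2, 0, 0, 0, 1, 0)) else Op (aff_matrix aff_id)
               | _ \<Rightarrow> Op (aff_matrix aff_id)))
     else Op (aff_matrix aff_id))"

definition uniform2 :: "nat \<Rightarrow> real" where "uniform2 i = (if i < 2 then 1/2 else 0)"

definition kg_verifier :: "nat \<Rightarrow> kg_sym adfa" where
  "kg_verifier K = \<lparr> states = range (to_nat :: vstate \<Rightarrow> nat), init = to_nat Start, accs = {to_nat Acc}, rejs = {to_nat Rej},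
     palph = {0, 1}, nregs = 3, dim = (\<lambda>r. if r = 0 then 2 else 5),
     v0 = (\<lambda>r. if r = 0 then (\<lambda>i. if i < 2 then 1/2 else 0) else if r < 3 then unit4 else (\<lambda>_. 0)),
     act = (\<lambda>q s g r. vacts K (from_nat q) s g r),
     trans = (\<lambda>q s g ou. (case vstep (from_nat q) s g ou of (q', d) \<Rightarrow> (to_nat q', d))) \<rparr>"

lemma aff_matrix_column_sum: "j < 5 \<Longrightarrow> (\<Sum>i<5. aff_matrix t i j) = 1"
  by (cases t) (auto simp: aff_matrix_def eval_nat_numeral lessThan_Suc less_Suc_eq)

lemma vstep_moves: "snd (vstep q s g ou) \<in> {-1, 0, 1} \<and> (s = LEnd \<longrightarrow> snd (vstep q s g ou) \<noteq> -1)
   \<and> (s = REnd \<longrightarrow> snd (vstep q s g ou) \<noteq> 1)"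
  by (cases q; cases s) (auto split: option.splits)

lemma column_sum_vacts:
  assumes "vacts K q s g r = Op Mx" "j < dim (kg_verifier K) r"
  shows "(\<Sum>i<dim (kg_verifier K) r. Mx i j) = 1"
proof (cases "r = 0")
  case True
  then show ?thesis using assms
    by (auto simp: vacts_def kg_verifier_def uniform_matrix_def split: tsym.splits if_splits)
next
  case False
  have "Mx \<in> range aff_matrix \<or> Mx = const_matrix unit4 \<or> Mx = const_matrix (budget_init K)"
    using assms(1) False by (auto simp: vacts_def split: tsym.splits if_splits)
  moreover have "dim (kg_verifier K) r = 5" using False by (simp add: kg_verifier_def)
  ultimately show ?thesis using assms(2) aff_matrix_column_sum
    by (auto simp: const_matrix_def unit4_def budget_init_def eval_nat_numeral lessThan_Suc)
qed

lemma wf_kg_verifier: "wf_adfa (kg_verifier K)"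
proof -
  let ?M = "kg_verifier K"
  have "\<forall>r < nregs ?M. 1 \<le> dim ?M r \<and> (\<Sum>i<dim ?M r. v0 ?M r i) = 1"
    by (auto simp: kg_verifier_def unit4_def eval_nat_numeral lessThan_Suc)
  moreover have "\<forall>q s g r Mx. act ?M q s g r = Op Mx \<longrightarrow> (\<forall>j < dim ?M r. (\<Sum>i<dim ?M r. Mx i j) = 1)"
    using column_sum_vacts[of K] by (simp add: kg_verifier_def)
  moreover have "fst (trans ?M q s g ou) \<in> states ?M \<and> snd (trans ?M q s g ou) \<in> {-1, 0, 1} \<and>
      (s = LEnd \<longrightarrow> snd (trans ?M q s g ou) \<noteq> -1) \<and> (s = REnd \<longrightarrow> snd (trans ?M q s g ou) \<noteq> 1)" for q s g ou
    using vstep_moves[of "from_nat q" s g ou] by (auto simp: kg_verifier_def split: prod.splits)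
  ultimately show ?thesis
    unfolding wf_adfa_def by (simp add: kg_verifier_def finite_vstate)
qed

section \<open>Runs of the verifier\<close>

definition regs :: "(nat \<Rightarrow> real) \<Rightarrow> (nat \<Rightarrow> real) \<Rightarrow> (nat \<Rightarrow> real) \<Rightarrow> nat \<Rightarrow> nat \<Rightarrow> real" where
  "regs a b c = (\<lambda>r. if r = 0 then a else if r = 1 then b else if r = 2 then c else (\<lambda>_. 0))"

abbreviation vreach :: "nat \<Rightarrow> kg_sym list \<Rightarrow> prover \<Rightarrow> nat set \<Rightarrow> nat \<Rightarrow> vstate \<Rightarrow> nat \<Rightarrow>
    (nat \<Rightarrow> real) \<Rightarrow> (nat \<Rightarrow> real) \<Rightarrow> (nat \<Rightarrow> real) \<Rightarrow> obs list \<Rightarrow> real" where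
  "vreach K w P T n q pos a b c h \<equiv> reach (kg_verifier K) w P T n (to_nat q) pos (regs a b c) h"

fun apply_ract :: "nat \<Rightarrow> ract \<Rightarrow> nat \<Rightarrow> (nat \<Rightarrow> real) \<Rightarrow> nat \<Rightarrow> real" where
  "apply_ract d (Op Mx) j u = (\<lambda>i. \<Sum>k<d. real_of_rat (Mx i k) * u k)"
| "apply_ract d Weigh j u = (\<lambda>i. if i = j then 1 else 0)"

lemma upd_regs: "upd (kg_verifier K) (to_nat q) s g (regs a b c) ou =
   regs (apply_ract 2 (vacts K q s g 0) (ou 0) a) (apply_ract 5 (vacts K q s g 1) (ou 1) b) (apply_ract 5 (vacts K q s g 2) (ou 2) c)"
proof (rule ext)
  fix r
  show "upd (kg_verifier K) (to_nat q) s g (regs a b c) ou r = regs (apply_ract 2 (vacts K q s g 0) (ou 0) a) (apply_ract 5 (vacts K q s g 1) (ou 1) b) (apply_ract 5 (vacts K q s g 2) (ou 2) c) r"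
  proof (cases "r < 3")
    case True
    then have "r = 0 \<or> r = 1 \<or> r = 2" by auto
    then show ?thesis unfolding upd_def regs_def
      by (auto simp: kg_verifier_def split: ract.splits)
  next
    case False
    then show ?thesis unfolding upd_def regs_def by (simp add: kg_verifier_def)
  qed
qed

definition weighed_regs :: "vstate \<Rightarrow> kg_sym tsym \<Rightarrow> nat set" where
  "weighed_regs q s = (case s of Sym a \<Rightarrow> if flips_coin q a then {0} else {}
      | LEnd \<Rightarrow> if q = BwdS then {1} else if q = AccCoin then {2} else {} | REnd \<Rightarrow> {})"

lemma flips_coin_Fwd: "flips_coin q a \<Longrightarrow> \<exists>d x. q = Fwd d x"
  by (cases q) auto

lemma weighed_kg_verifier: "weighed (kg_verifier K) (to_nat q) s g = weighed_regs q s"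
proof -
  have "weighed (kg_verifier K) (to_nat q) s g = {r. r < 3 \<and> vacts K q s g r = Weigh}"
    unfolding weighed_def by (simp add: kg_verifier_def)
  also have "\<dots> = weighed_regs q s"
  proof (rule set_eqI)
    fix r
    show "(r \<in> {r. r < 3 \<and> vacts K q s g r = Weigh}) = (r \<in> weighed_regs q s)"
    proof (cases s)
      case (Sym a) then show ?thesis
        by (cases "flips_coin q a") (auto simp: vacts_def weighed_regs_def dest: flips_coin_Fwd)
    qed (auto simp: vacts_def weighed_regs_def)
  qed
  finally show ?thesis .
qed

lemma outs_empty: "weighed M q s g = {} \<Longrightarrow> outs M q s g = {\<lambda>_. 0}"
  unfolding outs_def by (auto simp: fun_eq_iff)

lemma outs_single: "weighed M q s g = {r} \<Longrightarrow>
    outs M q s g = (\<lambda>j. (\<lambda>_. 0)(r := j)) ` {..<dim M r}"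
proof
  assume w: "weighed M q s g = {r}"
  show "outs M q s g \<subseteq> (\<lambda>j. (\<lambda>_. 0)(r := j)) ` {..<dim M r}"
  proof
    fix ou assume "ou \<in> outs M q s g"
    then have o: "\<forall>r'. (r' \<in> weighed M q s g \<longrightarrow> ou r' < dim M r') \<and> (r' \<notin> weighed M q s g \<longrightarrow> ou r' = 0)"
      unfolding outs_def by blast
    have "ou = (\<lambda>_. 0)(r := ou r)"
    proof
      fix x show "ou x = ((\<lambda>_. 0)(r := ou r)) x"
        using o[rule_format, of x] w by (cases "x = r") simp_all
    qed
    moreover have "ou r < dim M r" using o[rule_format, of r] w by simp
    ultimately show "ou \<in> (\<lambda>j. (\<lambda>_. 0)(r := j)) ` {..<dim M r}" by blast
  qed
  show "(\<lambda>j. (\<lambda>_. 0)(r := j)) ` {..<dim M r} \<subseteq> outs M q s g"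
  proof
    fix ou assume "ou \<in> (\<lambda>j. (\<lambda>_. 0)(r := j)) ` {..<dim M r}"
    then obtain j where j: "j < dim M r" "ou = (\<lambda>_. 0)(r := j)" by auto
    show "ou \<in> outs M q s g" unfolding outs_def using j w by simp
  qed
qed

lemma reach_halt: "q \<in> accs M \<union> rejs M \<Longrightarrow> reach M w P T (Suc n) q pos v h = (if q \<in> T then 1 else 0)"
  by simp

lemma reach_nonneg: "0 \<le> reach M w P T n q pos v h"
proof (induction n arbitrary: q pos v h)
  case 0 then show ?case by simp
next
  case (Suc n)
  have "0 \<le> wprob M q s g v ou" for s g ou
    unfolding wprob_def by (intro prod_nonneg) auto
  then show ?case using Suc
    by (auto simp: Let_def intro!: sum_nonneg mult_nonneg_nonneg split: prod.splits)
qed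

lemma accs_kg_verifier[simp]: "to_nat q \<in> accs (kg_verifier K) \<longleftrightarrow> q = Acc" by (auto simp: kg_verifier_def)
lemma rejs_kg_verifier[simp]: "to_nat q \<in> rejs (kg_verifier K) \<longleftrightarrow> q = Rej" by (auto simp: kg_verifier_def)

lemma trans_kg_verifier: "trans (kg_verifier K) (to_nat q) s g ou = (case vstep q s g ou of (q', d) \<Rightarrow> (to_nat q', d))"
  by (simp add: kg_verifier_def)

lemma dim_kg_verifier: "dim (kg_verifier K) r = (if r = 0 then 2 else 5)" by (simp add: kg_verifier_def)

lemma reach_unweighed_step:
  assumes "q \<noteq> Acc" "q \<noteq> Rej" "weighed_regs q (tape w pos) = {}"
  shows "reach (kg_verifier K) w P T (Suc n) (to_nat q) pos v h =
    (case vstep q (tape w pos) (P h) (\<lambda>_. 0) of (q', d) \<Rightarrow>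
      reach (kg_verifier K) w P T n (to_nat q') (nat (int pos + d)) (upd (kg_verifier K) (to_nat q) (tape w pos) (P h) v (\<lambda>_. 0))
        (h @ [(to_nat q', nat (int pos + d), \<lambda>_. 0)]))"
proof -
  have w: "weighed (kg_verifier K) (to_nat q) (tape w pos) (P h) = {}" using assms by (simp add: weighed_kg_verifier)
  have "wprob (kg_verifier K) (to_nat q) (tape w pos) (P h) v (\<lambda>_. 0) = 1" by (simp add: wprob_def w)
  then show ?thesis using assms
    by (simp add: Let_def outs_empty[OF w] trans_kg_verifier split: prod.splits)
qed

lemma reach_weighed_step:
  assumes "q \<noteq> Acc" "q \<noteq> Rej" "weighed_regs q (tape w pos) = {r}"
  shows "reach (kg_verifier K) w P T (Suc n) (to_nat q) pos v h =
    (\<Sum>j<dim (kg_verifier K) r. (\<bar>v r j\<bar> / (\<Sum>i<dim (kg_verifier K) r. \<bar>v r i\<bar>)) *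
    (case vstep q (tape w pos) (P h) ((\<lambda>_. 0)(r := j)) of (q', d) \<Rightarrow>
      reach (kg_verifier K) w P T n (to_nat q') (nat (int pos + d)) (upd (kg_verifier K) (to_nat q) (tape w pos) (P h) v ((\<lambda>_. 0)(r := j)))
        (h @ [(to_nat q', nat (int pos + d), (\<lambda>_. 0)(r := j))])))"
proof -
  have w: "weighed (kg_verifier K) (to_nat q) (tape w pos) (P h) = {r}" using assms by (simp add: weighed_kg_verifier)
  have wp: "wprob (kg_verifier K) (to_nat q) (tape w pos) (P h) v ((\<lambda>_. 0)(r := j)) = \<bar>v r j\<bar> / (\<Sum>i<dim (kg_verifier K) r. \<bar>v r i\<bar>)" for j
    by (simp add: wprob_def w)
  have inj: "inj_on (\<lambda>j. (\<lambda>_. 0::nat)(r := j)) {..<dim (kg_verifier K) r}"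
    by (auto simp: inj_on_def fun_eq_iff)
  show ?thesis using assms
    by (simp add: Let_def outs_single[OF w] trans_kg_verifier sum.reindex[OF inj], simp add: wp,
        intro sum.cong refl) (auto split: prod.splits)
qed

lemma weighed_regs_cases: "weighed_regs q s = {} \<or> (\<exists>r. weighed_regs q s = {r})"
  by (auto simp: weighed_regs_def split: tsym.splits)

lemma reach_le_1: "reach (kg_verifier K) w P T n (to_nat (q::vstate)) pos v h \<le> 1"
proof (induction n arbitrary: q pos v h)
  case 0 then show ?case by simp
next
  case (Suc n)
  show ?case
  proof (cases "q = Acc \<or> q = Rej")
    case True then show ?thesis by auto
  next
    case False
    then have nh: "q \<noteq> Acc" "q \<noteq> Rej" by auto
    from weighed_regs_cases[of q "tape w pos"] show ?thesis
    proof
      assume "weighed_regs q (tape w pos) = {}"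
      then show ?thesis unfolding reach_unweighed_step[OF nh \<open>weighed_regs q (tape w pos) = {}\<close>] using Suc.IH by (simp split: prod.splits)
    next
      assume "\<exists>r. weighed_regs q (tape w pos) = {r}"
      then obtain r where r: "weighed_regs q (tape w pos) = {r}" by blast
      show ?thesis unfolding reach_weighed_step[OF nh r]
        by (rule weighted_avg_le_1) (use Suc.IH in \<open>auto split: prod.splits\<close>)
    qed
  qed
qed

section \<open>The counter register and deterministic sweeps\<close>

(* The counter register holds (c, -c, p, -p, 1). Its l1-norm is 2|c| + 2|p| + 1, so weighing it
   yields the last basis state with probability 1/(2|c| + 2|p| + 1). *)
definition enc_cp :: "real \<Rightarrow> real \<Rightarrow> nat \<Rightarrow> real" where
  "enc_cp c p = (\<lambda>i. if i = 0 then c else if i = 1 then - c else if i = 2 then p else if i = 3 then - p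
     else if i = 4 then 1 else 0)"

definition aff_eval :: "aff_coeffs \<Rightarrow> real \<times> real \<Rightarrow> real \<times> real" where
  "aff_eval t cp = (case t of (a1, a2, a3, b1, b2, b3) \<Rightarrow> case cp of (c, p) \<Rightarrow>
     (of_rat a1 * c + of_rat a2 * p + of_rat a3, of_rat b1 * c + of_rat b2 * p + of_rat b3))"

definition counter_op :: "vstate \<Rightarrow> kg_sym \<Rightarrow> real \<times> real \<Rightarrow> real \<times> real" where
  "counter_op q s cp = aff_eval (counter_coeffs q s) cp"

lemma sum_lessThan_5: "(\<Sum>k<(5::nat). f k) = f 0 + f 1 + f 2 + f 3 + (f 4 :: real)"
  by (simp add: eval_nat_numeral lessThan_Suc)

lemma apply_aff_matrix: "apply_ract 5 (Op (aff_matrix t)) j (enc_cp c p) = enc_cp (fst (aff_eval t (c, p))) (snd (aff_eval t (c, p)))"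
proof (rule ext)
  fix i
  obtain a1 a2 a3 b1 b2 b3 where t: "t = (a1, a2, a3, b1, b2, b3)" by (cases t) auto
  show "apply_ract 5 (Op (aff_matrix t)) j (enc_cp c p) i = enc_cp (fst (aff_eval t (c, p))) (snd (aff_eval t (c, p))) i"
  proof (cases "i < 5")
    case True
    then have "i = 0 \<or> i = 1 \<or> i = 2 \<or> i = 3 \<or> i = 4" by auto
    then show ?thesis
      by (auto simp: t sum_lessThan_5 aff_matrix_def enc_cp_def aff_eval_def of_rat_add of_rat_diff of_rat_minus algebra_simps)
  next
    case False then show ?thesis by (simp add: aff_matrix_def enc_cp_def)
  qed
qed

lemma apply_aff_id: "(\<And>i. i \<ge> 5 \<Longrightarrow> u i = 0) \<Longrightarrow> apply_ract 5 (Op (aff_matrix aff_id)) j u = u"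
proof (rule ext)
  fix i assume z: "\<And>i. i \<ge> 5 \<Longrightarrow> u i = 0"
  show "apply_ract 5 (Op (aff_matrix aff_id)) j u i = u i"
  proof (cases "i < 5")
    case True
    then have "i = 0 \<or> i = 1 \<or> i = 2 \<or> i = 3 \<or> i = 4" by auto
    then show ?thesis by (auto simp: sum_lessThan_5 aff_matrix_def aff_id_def)
  next
    case False then show ?thesis using z by (simp add: aff_matrix_def)
  qed
qed

lemma apply_uniform_matrix: "u 0 + u 1 = 1 \<Longrightarrow> apply_ract 2 (Op uniform_matrix) j u = uniform2"
  by (rule ext) (auto simp: uniform_matrix_def uniform2_def eval_nat_numeral lessThan_Suc of_rat_divide algebra_simps simp flip: distrib_left)

lemma apply_const_matrix: "(\<Sum>k<5. u k) = 1 \<Longrightarrow> apply_ract 5 (Op (const_matrix r)) j u = (\<lambda>i. if i < 5 then of_rat (r i) else 0)"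
  by (rule ext) (simp add: const_matrix_def flip: sum_distrib_left)

lemma unit4_enc: "(\<lambda>i. if i < 5 then real_of_rat (unit4 i) else 0) = enc_cp 0 0"
  by (rule ext) (auto simp: unit4_def enc_cp_def)

lemma budget_init_enc: "(\<lambda>i. if i < 5 then real_of_rat (budget_init K i) else 0) = enc_cp (real K) 0"
  by (rule ext) (auto simp: budget_init_def enc_cp_def of_rat_minus)

lemma enc_cp_beyond: "i \<ge> 5 \<Longrightarrow> enc_cp c p i = 0" by (simp add: enc_cp_def)

lemma sum_enc_cp: "(\<Sum>k<5. enc_cp c p k) = 1" by (simp add: sum_lessThan_5 enc_cp_def)

lemma tape_at: "w = pre @ s # post \<Longrightarrow> tape w (Suc (length pre)) = Sym s"
  by (simp add: tape_def nth_append)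

lemma tape_0: "tape w 0 = LEnd" by (simp add: tape_def)
lemma tape_end: "tape w (Suc (length w)) = REnd" by (simp add: tape_def)

lemma reach_sym_step:
  assumes "q \<noteq> Acc" "q \<noteq> Rej" "q \<noteq> Start" "tape w pos = Sym s" "\<not> flips_coin q s"
    "vstep q (Sym s) (P h) (\<lambda>_. 0) = (q', d)" "a 0 + a 1 = 1" "\<And>i. i \<ge> 5 \<Longrightarrow> zz i = 0"
  shows "vreach K w P T (Suc n) q pos a (enc_cp c p) zz h =
    vreach K w P T n q' (nat (int pos + d)) uniform2 (enc_cp (fst (counter_op q s (c, p))) (snd (counter_op q s (c, p)))) zz
      (h @ [(to_nat q', nat (int pos + d), \<lambda>_. 0)])"
proof -
  have unweighed: "weighed_regs q (tape w pos) = {}" using assms by (simp add: weighed_regs_def)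
  have a0: "vacts K q (Sym s) (P h) 0 = Op uniform_matrix" using assms by (simp add: vacts_def)
  have a1: "vacts K q (Sym s) (P h) (Suc 0) = Op (aff_matrix (counter_coeffs q s))" using assms by (simp add: vacts_def)
  have a2: "vacts K q (Sym s) (P h) 2 = Op (aff_matrix aff_id)" using assms by (simp add: vacts_def)
  show ?thesis
    unfolding reach_unweighed_step[OF assms(1,2) unweighed] using assms
    by (simp add: upd_regs a0 a1 a2 apply_uniform_matrix apply_aff_matrix apply_aff_id counter_op_def del: apply_ract.simps)
qed

(* A sweep is a stretch of the run without coin flip, prover query, restart or rejection. There
   the run is deterministic, the budget register is untouched and the counter evolves by counter_op. *)
definition next_state :: "vstate \<Rightarrow> kg_sym \<Rightarrow> vstate" where "next_state q s = fst (vstep q (Sym s) 0 (\<lambda>_. 0))"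

definition blocked :: "vstate \<Rightarrow> kg_sym \<Rightarrow> bool" where
  "blocked q s \<longleftrightarrow> flips_coin q s \<or> (q = BwdNext \<and> s = RP) \<or> q = Start \<or> next_state q s = Rej"

fun sweep :: "vstate \<Rightarrow> real \<times> real \<Rightarrow> kg_sym list \<Rightarrow> (vstate \<times> (real \<times> real)) option" where
  "sweep q cp [] = Some (q, cp)"
| "sweep q cp (s # u) = (if blocked q s then None else sweep (next_state q s) (counter_op q s cp) u)"

lemma sweep_append: "sweep q cp (u @ v) = (case sweep q cp u of None \<Rightarrow> None | Some (q', cp') \<Rightarrow> sweep q' cp' v)"
  by (induction u arbitrary: q cp) auto

definition backward_state :: "vstate \<Rightarrow> bool" where
  "backward_state q \<longleftrightarrow> q \<in> {BwdNext, BwdEx, BwdRP, BwdAB, BwdAll, BwdS} \<or> (\<exists>c. q = BwdF1 c \<or> q = BwdF c \<or> q = BwdE c)"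

(* The prover sees the whole history. Within the current round, visits to Fwd ALP x record the
   coins and visits to BwdF1 y the prover's answers; all other states leave this information unchanged. *)
definition marker_states :: "nat set" where
  "marker_states = to_nat ` ({Start} \<union> range (Fwd ALP) \<union> range BwdF1)"

definition unmarked :: "obs \<Rightarrow> bool" where "unmarked ob \<longleftrightarrow> fst ob \<notin> marker_states"

lemma vstep_unblocked: "\<not> blocked q s \<Longrightarrow> vstep q (Sym s) g ou = vstep q (Sym s) 0 (\<lambda>_. 0)"
  by (cases q) (auto simp: blocked_def)

lemma next_state_unmarked: "\<not> blocked q s \<Longrightarrow> to_nat (next_state q s) \<notin> marker_states"
  unfolding marker_states_def blocked_def next_state_def
  by (cases q; cases s) (auto split: option.splits if_splits simp: is_bit_def elim: parse_step.elims)

lemma Fwd_step: "\<not> blocked (Fwd d x) s \<Longrightarrow> vstep (Fwd d x) (Sym s) 0 (\<lambda>_. 0) = (next_state (Fwd d x) s, 1) \<and> (\<exists>d' x'. next_state (Fwd d x) s = Fwd d' x')"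
  by (auto simp: blocked_def next_state_def split: option.splits)

lemma backward_step: "backward_state q \<Longrightarrow> \<not> blocked q s \<Longrightarrow> vstep q (Sym s) 0 (\<lambda>_. 0) = (next_state q s, -1) \<and> backward_state (next_state q s)"
  by (auto simp: backward_state_def blocked_def next_state_def split: if_splits)

lemma reach_sweep_right:
  assumes "sweep (Fwd d x) (c, p) u = Some (q', (c', p'))" "w = pre @ u @ post" "a 0 + a 1 = 1"
    "\<And>i. i \<ge> 5 \<Longrightarrow> zz i = 0"
  shows "\<exists>hs. (\<forall>ob\<in>set hs. unmarked ob) \<and>
    vreach K w P T (n + length u) (Fwd d x) (Suc (length pre)) a (enc_cp c p) zz h =
    vreach K w P T n q' (Suc (length pre + length u)) (if u = [] then a else uniform2) (enc_cp c' p') zz (h @ hs)"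
  using assms
proof (induction u arbitrary: pre d x c p a h)
  case Nil then show ?case by (intro exI[of _ "[]"]) simp
next
  case (Cons s u)
  have nb: "\<not> blocked (Fwd d x) s" using Cons.prems(1) by (auto split: if_splits)
  obtain d1 x1 where q1: "next_state (Fwd d x) s = Fwd d1 x1" using Fwd_step[OF nb] by blast
  have st: "vstep (Fwd d x) (Sym s) (P h) (\<lambda>_. 0) = (Fwd d1 x1, 1)"
    using Fwd_step[OF nb] vstep_unblocked[OF nb] q1 by simp
  have r1: "sweep (Fwd d1 x1) (counter_op (Fwd d x) s (c, p)) u = Some (q', (c', p'))"
    using Cons.prems(1) nb q1 by simp
  have tp: "tape w (Suc (length pre)) = Sym s" using Cons.prems(2) by (simp add: tape_at)
  have cs: "\<not> flips_coin (Fwd d x) s" using nb by (simp add: blocked_def)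
  have step: "vreach K w P T (Suc (n + length u)) (Fwd d x) (Suc (length pre)) a (enc_cp c p) zz h =
    vreach K w P T (n + length u) (Fwd d1 x1) (Suc (Suc (length pre))) uniform2 (enc_cp (fst (counter_op (Fwd d x) s (c, p))) (snd (counter_op (Fwd d x) s (c, p)))) zz
      (h @ [(to_nat (Fwd d1 x1), Suc (Suc (length pre)), \<lambda>_. 0)])"
  proof -
    have e: "nat (int (Suc (length pre)) + 1) = Suc (Suc (length pre))" by simp
    have zz: "\<And>i. i \<ge> 5 \<Longrightarrow> zz i = 0" by (rule Cons.prems(4))
    show ?thesis
      using reach_sym_step[where K=K and T=T and n="n + length u" and P=P and h=h and c=c and p=p and zz=zz, OF _ _ _ tp cs st Cons.prems(3) zz]
      unfolding e by simp
  qed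
  have w2: "w = (pre @ [s]) @ u @ post" using Cons.prems(2) by simp
  have "uniform2 0 + uniform2 1 = 1" by (simp add: uniform2_def)
  from Cons.IH[where c="fst (counter_op (Fwd d x) s (c, p))" and p="snd (counter_op (Fwd d x) s (c, p))" and d=d1 and x=x1
     and pre="pre @ [s]" and a=uniform2 and h="h @ [(to_nat (Fwd d1 x1), Suc (Suc (length pre)), \<lambda>_. 0)]"] r1 w2 this Cons.prems(4)
  obtain hs where hs: "\<forall>ob\<in>set hs. unmarked ob"
    "vreach K w P T (n + length u) (Fwd d1 x1) (Suc (Suc (length pre))) uniform2 (enc_cp (fst (counter_op (Fwd d x) s (c, p))) (snd (counter_op (Fwd d x) s (c, p)))) zz
      (h @ [(to_nat (Fwd d1 x1), Suc (Suc (length pre)), \<lambda>_. 0)]) =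
     vreach K w P T n q' (Suc (Suc (length pre + length u))) uniform2 (enc_cp c' p') zz
      (h @ [(to_nat (Fwd d1 x1), Suc (Suc (length pre)), \<lambda>_. 0)] @ hs)"
    by (auto simp: if_distrib cong: if_cong)
  have "unmarked (to_nat (Fwd d1 x1), Suc (Suc (length pre)), \<lambda>_. 0)"
    using next_state_unmarked[OF nb] q1 by (simp add: unmarked_def)
  then show ?case
    using step hs
    by (intro exI[of _ "(to_nat (Fwd d1 x1), Suc (Suc (length pre)), \<lambda>_. 0) # hs"]) simp
qed

lemma reach_sweep_left:
  assumes "sweep q (c, p) (rev u) = Some (q', (c', p'))" "backward_state q" "w = pre @ u @ post" "a 0 + a 1 = 1"
    "\<And>i. i \<ge> 5 \<Longrightarrow> zz i = 0"
  shows "\<exists>hs. (\<forall>ob\<in>set hs. unmarked ob) \<and>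
    vreach K w P T (n + length u) q (length pre + length u) a (enc_cp c p) zz h =
    vreach K w P T n q' (length pre) (if u = [] then a else uniform2) (enc_cp c' p') zz (h @ hs)"
  using assms
proof (induction u arbitrary: post q c p a h rule: rev_induct)
  case Nil then show ?case by (intro exI[of _ "[]"]) simp
next
  case (snoc s u)
  have rn1: "sweep q (c, p) (s # rev u) = Some (q', (c', p'))" using snoc.prems(1) by simp
  have nb: "\<not> blocked q s" using rn1 by (auto split: if_splits)
  define q1 where "q1 = next_state q s"
  have ts: "vstep q (Sym s) 0 (\<lambda>_. 0) = (q1, -1)" "backward_state q1" using backward_step[OF snoc.prems(2) nb] q1_def by auto
  have st: "vstep q (Sym s) (P h) (\<lambda>_. 0) = (q1, -1)"
    using ts vstep_unblocked[OF nb] by simp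
  have r1: "sweep q1 (counter_op q s (c, p)) (rev u) = Some (q', (c', p'))"
    using rn1 nb q1_def by simp
  have w2: "w = pre @ u @ s # post" using snoc.prems(3) by simp
  have tp: "tape w (Suc (length (pre @ u))) = Sym s" using w2 tape_at[of w "pre @ u" s post] by simp
  have cs: "\<not> flips_coin q s" using nb by (simp add: blocked_def)
  have nA: "q \<noteq> Acc" "q \<noteq> Rej" "q \<noteq> Start" using snoc.prems(2) by (auto simp: backward_state_def)
  have step: "vreach K w P T (Suc (n + length u)) q (Suc (length (pre @ u))) a (enc_cp c p) zz h =
    vreach K w P T (n + length u) q1 (length pre + length u) uniform2 (enc_cp (fst (counter_op q s (c, p))) (snd (counter_op q s (c, p)))) zz
      (h @ [(to_nat q1, length pre + length u, \<lambda>_. 0)])"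
  proof -
    have e: "nat (int (Suc (length (pre @ u))) + -1) = length pre + length u" by simp
    have zz: "\<And>i. i \<ge> 5 \<Longrightarrow> zz i = 0" by (rule snoc.prems(5))
    show ?thesis
      using reach_sym_step[where K=K and T=T and n="n + length u" and P=P and h=h and c=c and p=p and zz=zz, OF nA tp cs st snoc.prems(4) zz]
      unfolding e by simp
  qed
  have "uniform2 0 + uniform2 1 = 1" by (simp add: uniform2_def)
  from snoc.IH[where c="fst (counter_op q s (c, p))" and p="snd (counter_op q s (c, p))" and q=q1
     and post="s # post" and a=uniform2 and h="h @ [(to_nat q1, length pre + length u, \<lambda>_. 0)]"] r1 ts(2) w2 this snoc.prems(5)
  obtain hs where hs: "\<forall>ob\<in>set hs. unmarked ob"
    "vreach K w P T (n + length u) q1 (length pre + length u) uniform2 (enc_cp (fst (counter_op q s (c, p))) (snd (counter_op q s (c, p)))) zz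
      (h @ [(to_nat q1, length pre + length u, \<lambda>_. 0)]) =
     vreach K w P T n q' (length pre) uniform2 (enc_cp c' p') zz
      (h @ [(to_nat q1, length pre + length u, \<lambda>_. 0)] @ hs)"
    by (auto simp: if_distrib cong: if_cong)
  have "unmarked (to_nat q1, length pre + length u, \<lambda>_. 0)"
    using next_state_unmarked[OF nb] q1_def by (simp add: unmarked_def)
  then show ?case
    using step hs
    by (intro exI[of _ "(to_nat q1, length pre + length u, \<lambda>_. 0) # hs"]) simp
qed

section \<open>Sweeps over binary numbers\<close>

definition bit_sym :: "bool \<Rightarrow> kg_sym" where "bit_sym b = (if b then B1 else B0)"
definition bit_real :: "bool \<Rightarrow> real" where "bit_real b = (if b then 1 else 0)"

lemma enc_bits_Cons: "enc_bits (b # bs) = bit_sym b # enc_bits bs" by (simp add: enc_bits_def bit_sym_def)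
lemma enc_bits_Nil: "enc_bits [] = []" by (simp add: enc_bits_def)
lemma length_enc_bits[simp]: "length (enc_bits bs) = length bs" by (simp add: enc_bits_def)

lemma foldl_bits_shift: "foldl (\<lambda>acc b. 2 * acc + (if b then 1 else 0)) a bs = a * 2 ^ length bs + foldl (\<lambda>acc b. 2 * acc + (if b then 1 else 0)) (0::nat) bs"
proof (induction bs arbitrary: a)
  case Nil then show ?case by simp
next
  case (Cons b bs)
  have "foldl (\<lambda>acc b. 2 * acc + (if b then 1 else 0)) a (b # bs) = (2 * a + (if b then 1 else 0)) * 2 ^ length bs + foldl (\<lambda>acc b. 2 * acc + (if b then 1 else 0)) (0::nat) bs"
    using Cons[of "2 * a + (if b then 1 else 0)"] by simp
  moreover have "foldl (\<lambda>acc b. 2 * acc + (if b then 1 else 0)) (0::nat) (b # bs) = (if b then 1 else 0) * 2 ^ length bs + foldl (\<lambda>acc b. 2 * acc + (if b then 1 else 0)) (0::nat) bs"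
    using Cons[of "(if b then 1 else 0)"] by simp
  ultimately show ?case by (simp add: algebra_simps)
qed

lemma bits_val_Cons: "real (bits_val (b # bs)) = bit_real b * 2 ^ length bs + real (bits_val bs)"
  unfolding bits_val_def using foldl_bits_shift[of "if b then 1 else 0" bs] by (simp add: bit_real_def)

lemma bits_val_snoc: "real (bits_val (bs @ [b])) = 2 * real (bits_val bs) + bit_real b"
  unfolding bits_val_def by (simp add: bit_real_def)

lemmas sweep_simps = blocked_def next_state_def counter_op_def aff_eval_def is_bit_def bit_rat_def bit_sym_def bit_real_def aff_id_def

lemma sweep_S1: "sweep (Fwd S1 x) (c, p) (enc_bits bs) = Some (Fwd S1 x, (c * 2 ^ length bs + real (bits_val bs), p))"
proof (induction bs arbitrary: c)
  case Nil then show ?case by (simp add: enc_bits_Nil bits_val_def)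
next
  case (Cons b bs)
  have "sweep (Fwd S1 x) (c, p) (enc_bits (b # bs)) = sweep (Fwd S1 x) (2 * c + bit_real b, p) (enc_bits bs)"
    by (cases b) (simp_all add: enc_bits_Cons sweep_simps)
  then show ?case using Cons by (simp add: bits_val_Cons algebra_simps)
qed

lemma sweep_S0: "bs \<noteq> [] \<Longrightarrow> sweep (Fwd S0 x) (c, p) (enc_bits bs) = Some (Fwd S1 x, (c * 2 ^ length bs + real (bits_val bs), p))"
proof (cases bs)
  case (Cons b bs')
  have "sweep (Fwd S0 x) (c, p) (enc_bits (b # bs')) = sweep (Fwd S1 x) (2 * c + bit_real b, p) (enc_bits bs')"
    by (cases b) (simp_all add: enc_bits_Cons sweep_simps)
  then show ?thesis using Cons by (simp add: sweep_S1 bits_val_Cons algebra_simps)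
qed simp

lemma sweep_Aa2: "sweep (Fwd Aa2 x) (c, p) (enc_bits bs) = Some (Fwd Aa2 x, (c, if x then p * 2 ^ length bs + real (bits_val bs) else p))"
proof (induction bs arbitrary: p)
  case Nil then show ?case by (simp add: enc_bits_Nil bits_val_def)
next
  case (Cons b bs)
  have "sweep (Fwd Aa2 x) (c, p) (enc_bits (b # bs)) = sweep (Fwd Aa2 x) (c, if x then 2 * p + bit_real b else p) (enc_bits bs)"
    by (cases b; cases x) (simp_all add: enc_bits_Cons sweep_simps)
  then show ?case using Cons by (simp add: bits_val_Cons algebra_simps)
qed

lemma sweep_Aa1: "bs \<noteq> [] \<Longrightarrow> sweep (Fwd Aa1 x) (c, p) (enc_bits bs) = Some (Fwd Aa2 x, (c, if x then p * 2 ^ length bs + real (bits_val bs) else p))"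
proof (cases bs)
  case (Cons b bs')
  have "sweep (Fwd Aa1 x) (c, p) (enc_bits (b # bs')) = sweep (Fwd Aa2 x) (c, if x then 2 * p + bit_real b else p) (enc_bits bs')"
    by (cases b; cases x) (simp_all add: enc_bits_Cons sweep_simps)
  then show ?thesis using Cons by (simp add: sweep_Aa2 bits_val_Cons algebra_simps)
qed simp

lemma sweep_Ab2: "sweep (Fwd Ab2 x) (c, p) (enc_bits bs) = Some (Fwd Ab2 x, (c, if \<not> x then p * 2 ^ length bs + real (bits_val bs) else p))"
proof (induction bs arbitrary: p)
  case Nil then show ?case by (simp add: enc_bits_Nil bits_val_def)
next
  case (Cons b bs)
  have "sweep (Fwd Ab2 x) (c, p) (enc_bits (b # bs)) = sweep (Fwd Ab2 x) (c, if \<not> x then 2 * p + bit_real b else p) (enc_bits bs)"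
    by (cases b; cases x) (simp_all add: enc_bits_Cons sweep_simps)
  then show ?case using Cons by (simp add: bits_val_Cons algebra_simps)
qed

lemma sweep_Ab1: "bs \<noteq> [] \<Longrightarrow> sweep (Fwd Ab1 x) (c, p) (enc_bits bs) = Some (Fwd Ab2 x, (c, if \<not> x then p * 2 ^ length bs + real (bits_val bs) else p))"
proof (cases bs)
  case (Cons b bs')
  have "sweep (Fwd Ab1 x) (c, p) (enc_bits (b # bs')) = sweep (Fwd Ab2 x) (c, if \<not> x then 2 * p + bit_real b else p) (enc_bits bs')"
    by (cases b; cases x) (simp_all add: enc_bits_Cons sweep_simps)
  then show ?thesis using Cons by (simp add: sweep_Ab2 bits_val_Cons algebra_simps)
qed simp

lemma sweep_Ee2: "sweep (Fwd Ee2 x) cp (enc_bits bs) = Some (Fwd Ee2 x, cp)"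
  by (induction bs) (auto simp: enc_bits_Cons enc_bits_Nil sweep_simps)

lemma sweep_Ee1: "bs \<noteq> [] \<Longrightarrow> sweep (Fwd Ee1 x) cp (enc_bits bs) = Some (Fwd Ee2 x, cp)"
  by (cases bs) (auto simp: enc_bits_Cons sweep_Ee2 sweep_simps)

lemma sweep_Ef2: "sweep (Fwd Ef2 x) cp (enc_bits bs) = Some (Fwd Ef2 x, cp)"
  by (induction bs) (auto simp: enc_bits_Cons enc_bits_Nil sweep_simps)

lemma sweep_Ef1: "bs \<noteq> [] \<Longrightarrow> sweep (Fwd Ef1 x) cp (enc_bits bs) = Some (Fwd Ef2 x, cp)"
  by (cases bs) (auto simp: enc_bits_Cons sweep_Ef2 sweep_simps)

lemma enc_block_eq: "enc_block (a, b, e, f) = [All, LP] @ enc_bits a @ [Cm] @ enc_bits b @ [RP, Ex, LP] @ enc_bits e @ [Cm] @ enc_bits f @ [RP]"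
  by (simp add: enc_block_def enc_pair_def)

lemma sweep_block_forward:
  assumes "a \<noteq> []" "b \<noteq> []" "e \<noteq> []" "f \<noteq> []"
  shows "sweep (Fwd ALP x) (c, 0) (tl (enc_block (a, b, e, f))) =
    Some (Fwd BlkEnd x, (c - real (if x then bits_val a else bits_val b), 0))"
  using assms
  by (cases x) (simp_all add: enc_block_eq sweep_append sweep_Aa1 sweep_Ab1 sweep_Ee1 sweep_Ef1 sweep_simps)

lemma rev_enc_bits_snoc: "rev (enc_bits (bs @ [b])) = bit_sym b # rev (enc_bits bs)"
  by (simp add: enc_bits_def bit_sym_def)

lemma sweep_BwdF_False: "sweep (BwdF False) (c, p) (rev (enc_bits bs)) = Some (BwdF False, (c - p * real (bits_val bs), p * 2 ^ length bs))"
proof (induction bs arbitrary: p c rule: rev_induct)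
  case Nil then show ?case by (simp add: enc_bits_Nil bits_val_def)
next
  case (snoc b bs)
  have "sweep (BwdF False) (c, p) (rev (enc_bits (bs @ [b]))) = sweep (BwdF False) (c - bit_real b * p, 2 * p) (rev (enc_bits bs))"
    by (cases b) (simp_all add: rev_enc_bits_snoc sweep_simps)
  then show ?case using snoc by (simp add: bits_val_snoc algebra_simps)
qed

lemma sweep_BwdF_True: "sweep (BwdF True) cp (rev (enc_bits bs)) = Some (BwdF True, cp)"
  by (induction bs rule: rev_induct) (auto simp: rev_enc_bits_snoc enc_bits_Nil sweep_simps)

lemma sweep_BwdE_True: "sweep (BwdE True) (c, p) (rev (enc_bits bs)) = Some (BwdE True, (c - p * real (bits_val bs), p * 2 ^ length bs))"
proof (induction bs arbitrary: p c rule: rev_induct)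
  case Nil then show ?case by (simp add: enc_bits_Nil bits_val_def)
next
  case (snoc b bs)
  have "sweep (BwdE True) (c, p) (rev (enc_bits (bs @ [b]))) = sweep (BwdE True) (c - bit_real b * p, 2 * p) (rev (enc_bits bs))"
    by (cases b) (simp_all add: rev_enc_bits_snoc sweep_simps)
  then show ?case using snoc by (simp add: bits_val_snoc algebra_simps)
qed

lemma sweep_BwdE_False: "sweep (BwdE False) cp (rev (enc_bits bs)) = Some (BwdE False, cp)"
  by (induction bs rule: rev_induct) (auto simp: rev_enc_bits_snoc enc_bits_Nil sweep_simps)

lemma sweep_BwdF1: "bs \<noteq> [] \<Longrightarrow> sweep (BwdF1 ch) cp (rev (enc_bits bs)) = sweep (BwdF ch) cp (rev (enc_bits bs))"
  by (cases bs rule: rev_cases) (auto simp: rev_enc_bits_snoc sweep_simps)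

lemma sweep_BwdAB: "(\<forall>s\<in>set u. is_bit s \<or> s = Cm) \<Longrightarrow> sweep BwdAB cp u = Some (BwdAB, cp)"
  by (induction u) (auto simp: sweep_simps)

lemma sweep_BwdS: "sweep BwdS cp (rev (enc_bits bs)) = Some (BwdS, cp)"
  by (induction bs rule: rev_induct) (auto simp: rev_enc_bits_snoc enc_bits_Nil sweep_simps)

lemma sweep_BwdNext_S: "bs \<noteq> [] \<Longrightarrow> sweep BwdNext (c, p) (rev (enc_bits bs)) = Some (BwdS, (c, 0))"
  by (cases bs rule: rev_cases) (auto simp: rev_enc_bits_snoc sweep_BwdS sweep_simps)

lemma set_enc_bits: "s \<in> set (enc_bits bs) \<Longrightarrow> is_bit s"
  by (auto simp: enc_bits_def is_bit_def)

lemma sweep_block_backward: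
  assumes "a \<noteq> []" "b \<noteq> []" "e \<noteq> []" "f \<noteq> []"
  shows "sweep (BwdF1 ch) (c, 1) (tl (rev (enc_block (a, b, e, f)))) =
    Some (BwdNext, (c - real (if ch then bits_val e else bits_val f), if ch then 2 ^ length e else 1))"
proof -
  have tab: "sweep BwdAB cp (rev (enc_bits bs)) = Some (BwdAB, cp)" for cp bs
    by (rule sweep_BwdAB) (auto dest: set_enc_bits)
  have eq: "tl (rev (enc_block (a, b, e, f))) = rev (enc_bits f) @ Cm # rev (enc_bits e) @ [LP, Ex, RP] @
     (rev (enc_bits b) @ Cm # rev (enc_bits a)) @ [LP, All]"
    by (simp add: enc_block_eq)
  show ?thesis
    unfolding eq using assms
    by (cases ch) (simp_all add: sweep_append sweep_BwdF1 sweep_BwdF_False sweep_BwdF_True sweep_BwdE_True sweep_BwdE_False tab sweep_simps del: append_assoc)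
qed

section \<open>Round histories\<close>

definition current_round :: "obs list \<Rightarrow> obs list" where
  "current_round h = rev (takeWhile (\<lambda>ob. fst ob \<noteq> to_nat Start) (rev h))"
definition round_coins :: "obs list \<Rightarrow> bool list" where
  "round_coins h = map (\<lambda>ob. fst ob = to_nat (Fwd ALP True)) (filter (\<lambda>ob. fst ob \<in> to_nat ` range (Fwd ALP)) (current_round h))"
definition round_queries :: "obs list \<Rightarrow> nat" where
  "round_queries h = length (filter (\<lambda>ob. fst ob \<in> to_nat ` range BwdF1) (current_round h))"

lemma current_round_snoc: "current_round (h @ [ob]) = (if fst ob = to_nat Start then [] else current_round h @ [ob])"
  by (simp add: current_round_def)

lemma current_round_Nil: "current_round [] = []" by (simp add: current_round_def)

lemma round_unmarked1: "unmarked ob \<Longrightarrow> round_coins (h @ [ob]) = round_coins h \<and> round_queries (h @ [ob]) = round_queries h"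
  by (auto simp: unmarked_def marker_states_def round_coins_def round_queries_def current_round_snoc)

lemma round_unmarked: "\<forall>ob\<in>set hs. unmarked ob \<Longrightarrow> round_coins (h @ hs) = round_coins h \<and> round_queries (h @ hs) = round_queries h"
proof (induction hs arbitrary: h)
  case Nil then show ?case by simp
next
  case (Cons ob hs)
  then show ?case using round_unmarked1[of ob h] Cons.IH[of "h @ [ob]"] by simp
qed

lemma round_coin: "round_coins (h @ [(to_nat (Fwd ALP b), pos, ou)]) = round_coins h @ [b] \<and> round_queries (h @ [(to_nat (Fwd ALP b), pos, ou)]) = round_queries h"
  by (auto simp: round_coins_def round_queries_def current_round_snoc)

lemma round_query: "round_coins (h @ [(to_nat (BwdF1 c), pos, ou)]) = round_coins h \<and> round_queries (h @ [(to_nat (BwdF1 c), pos, ou)]) = Suc (round_queries h)"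
  by (auto simp: round_coins_def round_queries_def current_round_snoc)

lemma round_restart: "round_coins (h @ [(to_nat Start, pos, ou)]) = [] \<and> round_queries (h @ [(to_nat Start, pos, ou)]) = 0"
  by (auto simp: round_coins_def round_queries_def current_round_snoc)

section \<open>One round\<close>

lemma regs_0[simp]: "regs a b c 0 = a" and regs_1[simp]: "regs a b c (Suc 0) = b" and regs_2[simp]: "regs a b c 2 = c"
  by (simp_all add: regs_def)

definition basis :: "nat \<Rightarrow> nat \<Rightarrow> real" where "basis j = (\<lambda>i. if i = j then 1 else 0)"

lemma apply_weigh: "apply_ract d Weigh j u = basis j" by (simp add: basis_def fun_eq_iff)

lemma nat_int_Suc: "nat (int pos + 1) = Suc pos" by simp

lemma sum_lessThan_2: "(\<Sum>k<(2::nat). f k) = f 0 + (f 1 :: real)"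
  by (simp add: eval_nat_numeral lessThan_Suc)

lemma reach_coin_step:
  assumes "d = S1 \<or> d = BlkEnd" "tape w pos = Sym All"
  shows "vreach K w P T (Suc n) (Fwd d x) pos uniform2 (enc_cp c p) (enc_cp z 0) h =
    1/2 * vreach K w P T n (Fwd ALP True) (Suc pos) (basis 0) (enc_cp c p) (enc_cp (2 * z) 0)
       (h @ [(to_nat (Fwd ALP True), Suc pos, (\<lambda>_. 0)(0 := 0))]) +
    1/2 * vreach K w P T n (Fwd ALP False) (Suc pos) (basis 1) (enc_cp c p) (enc_cp (2 * z) 0)
       (h @ [(to_nat (Fwd ALP False), Suc pos, (\<lambda>_. 0)(0 := 1))])"
proof -
  have nh: "Fwd d x \<noteq> Acc" "Fwd d x \<noteq> Rej" by auto
  have cs: "flips_coin (Fwd d x) All" using assms by auto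
  have Wq: "weighed_regs (Fwd d x) (tape w pos) = {0}" using assms cs by (simp add: weighed_regs_def)
  have a0: "vacts K (Fwd d x) (Sym All) g 0 = Weigh" for g using cs by (simp add: vacts_def)
  have a1: "vacts K (Fwd d x) (Sym All) g (Suc 0) = Op (aff_matrix aff_id)" for g using assms by (auto simp: vacts_def is_bit_def)
  have a2: "vacts K (Fwd d x) (Sym All) g 2 = Op (aff_matrix (2, 0, 0, 0, 1, 0))" for g using cs by (simp add: vacts_def)
  have st: "vstep (Fwd d x) (Sym All) g ou = (Fwd ALP (ou 0 = 0), 1)" for g ou using assms by (auto simp: is_bit_def)
  have idc: "aff_eval aff_id (c, p) = (c, p)" by (simp add: aff_eval_def aff_id_def)
  have zc: "aff_eval (2, 0, 0, 0, 1, 0) (z, 0) = (2 * z, 0)" by (simp add: aff_eval_def)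
  show ?thesis
    unfolding reach_weighed_step[OF nh Wq] assms(2) st
    by (simp add: sum_lessThan_2 dim_kg_verifier uniform2_def upd_regs a0 a1 a2 apply_aff_matrix idc zc apply_weigh nat_int_Suc del: apply_ract.simps)
qed

lemma enc_cp_simps: "enc_cp c p 0 = c" "enc_cp c p (Suc 0) = - c" "enc_cp c p 2 = p" "enc_cp c p 3 = - p" "enc_cp c p 4 = 1"
  by (simp_all add: enc_cp_def)

lemma basis_4: "basis 4 = enc_cp 0 0" by (simp add: basis_def enc_cp_def fun_eq_iff)

lemma sum_basis: "j < 5 \<Longrightarrow> (\<Sum>k<5. basis j k) = 1"
  by (simp add: basis_def)

lemma reach_rend_step:
  assumes "tape w pos = REnd" "pos \<ge> 1" "a 0 + a 1 = 1" "\<And>i. i \<ge> 5 \<Longrightarrow> b i = 0" "\<And>i. i \<ge> 5 \<Longrightarrow> zz i = 0"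
  shows "vreach K w P T (Suc n) (Fwd BlkEnd x) pos a b zz h =
    vreach K w P T n BwdNext (pos - 1) uniform2 b zz (h @ [(to_nat BwdNext, pos - 1, \<lambda>_. 0)])"
proof -
  have nh: "Fwd BlkEnd x \<noteq> Acc" "Fwd BlkEnd x \<noteq> Rej" by auto
  have Wq: "weighed_regs (Fwd BlkEnd x) (tape w pos) = {}" using assms by (simp add: weighed_regs_def)
  have e: "nat (int pos - 1) = pos - 1" using assms(2) by simp
  have a0: "vacts K (Fwd BlkEnd x) REnd g 0 = Op uniform_matrix" for g by (simp add: vacts_def)
  have a1: "vacts K (Fwd BlkEnd x) REnd g (Suc 0) = Op (aff_matrix aff_id)" for g by (simp add: vacts_def)
  have a2: "vacts K (Fwd BlkEnd x) REnd g 2 = Op (aff_matrix aff_id)" for g by (simp add: vacts_def)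
  show ?thesis
    unfolding reach_unweighed_step[OF nh Wq] assms(1)
    using assms(3-5) by (simp add: e upd_regs a0 a1 a2 apply_uniform_matrix apply_aff_id del: apply_ract.simps)
qed

lemma reach_test_step:
  assumes "a 0 + a 1 = 1" "\<And>i. i \<ge> 5 \<Longrightarrow> zz i = 0"
  shows "vreach K w P T (Suc (Suc m)) BwdS 0 a (enc_cp c 0) zz h =
    (2 * \<bar>c\<bar> / (2 * \<bar>c\<bar> + 1)) * (if to_nat Rej \<in> T then 1 else 0) +
    (1 / (2 * \<bar>c\<bar> + 1)) * vreach K w P T (Suc m) AccCoin 0 uniform2 (enc_cp 0 0) zz
       (h @ [(to_nat AccCoin, 0, (\<lambda>_. 0)(1 := 4))])"
proof -
  have nh: "BwdS \<noteq> Acc" "BwdS \<noteq> Rej" by auto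
  have Wq: "weighed_regs BwdS (tape w 0) = {1}" by (simp add: weighed_regs_def tape_0)
  have a0: "vacts K BwdS LEnd g 0 = Op uniform_matrix" for g by (simp add: vacts_def)
  have a1: "vacts K BwdS LEnd g (Suc 0) = Weigh" for g by (simp add: vacts_def)
  have a2: "vacts K BwdS LEnd g 2 = Op (aff_matrix aff_id)" for g by (simp add: vacts_def)
  have sm: "(\<Sum>i<5. \<bar>enc_cp c 0 i\<bar>) = 2 * \<bar>c\<bar> + 1" by (simp add: sum_lessThan_5 enc_cp_def)
  have dm: "dim (kg_verifier K) 1 = 5" by (simp add: dim_kg_verifier)
  have V1: "regs a b zz 1 = b" for a b zz by (simp add: regs_def)
  show ?thesis
    unfolding reach_weighed_step[OF nh Wq] tape_0 dm V1 sm sum_lessThan_5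
    using assms
    by (simp add: upd_regs a0 a1 a2 apply_uniform_matrix apply_aff_id apply_weigh basis_4 reach_halt enc_cp_simps enc_cp_beyond del: apply_ract.simps reach.simps)
qed

lemma reach_acc_coin_step:
  assumes "a 0 + a 1 = 1" "\<And>i. i \<ge> 5 \<Longrightarrow> b i = 0"
  shows "vreach K w P T (Suc (Suc m)) AccCoin 0 a b (enc_cp z 0) h =
    (1 / (2 * \<bar>z\<bar> + 1)) * (if to_nat Acc \<in> T then 1 else 0) +
    (\<bar>z\<bar> / (2 * \<bar>z\<bar> + 1)) * (vreach K w P T (Suc m) Start 0 uniform2 b (basis 0)
       (h @ [(to_nat Start, 0, (\<lambda>_. 0)(2 := 0))]) +
     vreach K w P T (Suc m) Start 0 uniform2 b (basis 1)
       (h @ [(to_nat Start, 0, (\<lambda>_. 0)(2 := 1))]))"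
proof -
  have nh: "AccCoin \<noteq> Acc" "AccCoin \<noteq> Rej" by auto
  have Wq: "weighed_regs AccCoin (tape w 0) = {2}" by (simp add: weighed_regs_def tape_0)
  have a0: "vacts K AccCoin LEnd g 0 = Op uniform_matrix" for g by (simp add: vacts_def)
  have a1: "vacts K AccCoin LEnd g (Suc 0) = Op (aff_matrix aff_id)" for g by (simp add: vacts_def)
  have a2: "vacts K AccCoin LEnd g 2 = Weigh" for g by (simp add: vacts_def)
  have sm: "(\<Sum>i<5. \<bar>enc_cp z 0 i\<bar>) = 2 * \<bar>z\<bar> + 1" by (simp add: sum_lessThan_5 enc_cp_def)
  have dm: "dim (kg_verifier K) 2 = 5" by (simp add: dim_kg_verifier)
  show ?thesis
    unfolding reach_weighed_step[OF nh Wq] tape_0 dm regs_2 sm sum_lessThan_5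
    using assms
    by (simp add: upd_regs a0 a1 a2 apply_uniform_matrix apply_aff_id apply_weigh reach_halt enc_cp_simps distrib_left del: apply_ract.simps reach.simps)
qed

lemma reach_start_step:
  assumes "a 0 + a 1 = 1" "(\<Sum>k<5. b k) = 1" "(\<Sum>k<5. zz k) = 1"
  shows "vreach K w P T (Suc n) Start 0 a b zz h =
    vreach K w P T n (Fwd S0 False) 1 uniform2 (enc_cp 0 0) (enc_cp (real K) 0)
      (h @ [(to_nat (Fwd S0 False), 1, \<lambda>_. 0)])"
proof -
  have nh: "Start \<noteq> Acc" "Start \<noteq> Rej" by auto
  have Wq: "weighed_regs Start (tape w 0) = {}" by (simp add: weighed_regs_def tape_0)
  have a0: "vacts K Start LEnd g 0 = Op uniform_matrix" for g by (simp add: vacts_def)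
  have a1: "vacts K Start LEnd g (Suc 0) = Op (const_matrix unit4)" for g by (simp add: vacts_def)
  have a2: "vacts K Start LEnd g 2 = Op (const_matrix (budget_init K))" for g by (simp add: vacts_def)
  show ?thesis
    unfolding reach_unweighed_step[OF nh Wq] tape_0
    using assms by (simp add: upd_regs a0 a1 a2 apply_uniform_matrix apply_const_matrix unit4_enc budget_init_enc del: apply_ract.simps)
qed

type_synonym block = "bool list \<times> bool list \<times> bool list \<times> bool list"

definition univ_val :: "block \<Rightarrow> bool \<Rightarrow> nat" where "univ_val blk t = (case blk of (a, b, e, f) \<Rightarrow> if t then bits_val a else bits_val b)"
definition exist_val :: "block \<Rightarrow> bool \<Rightarrow> nat" where "exist_val blk t = (case blk of (a, b, e, f) \<Rightarrow> if t then bits_val e else bits_val f)"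
definition univ_sum :: "block list \<Rightarrow> bool list \<Rightarrow> nat" where "univ_sum bl xs = (\<Sum>i<length bl. univ_val (bl ! i) (xs ! i))"
definition exist_sum :: "block list \<Rightarrow> (nat \<Rightarrow> bool) \<Rightarrow> nat" where "exist_sum bl Y = (\<Sum>i<length bl. exist_val (bl ! i) (Y i))"

lemma univ_sum_Cons: "univ_sum (blk # bl) (t # xs) = univ_val blk t + univ_sum bl xs"
  unfolding univ_sum_def length_Cons sum.lessThan_Suc_shift by simp

lemma univ_sum_single: "univ_sum [blk] [t] = univ_val blk t" by (simp add: univ_sum_def)

definition block_nonempty :: "block \<Rightarrow> bool" where "block_nonempty blk = (case blk of (a, b, e, f) \<Rightarrow> a \<noteq> [] \<and> b \<noteq> [] \<and> e \<noteq> [] \<and> f \<noteq> [])"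

lemma uniform2_sum: "uniform2 0 + uniform2 1 = 1" by (simp add: uniform2_def)
lemma basis_sum2: "j < 2 \<Longrightarrow> basis j 0 + basis j 1 = 1" by (auto simp: basis_def)

lemma reach_forward_block:
  assumes "d = S1 \<or> d = BlkEnd" "w = pre @ enc_block blk @ post" "block_nonempty blk"
  shows "\<exists>hT hF. round_coins (h @ hT) = round_coins h @ [True] \<and> round_queries (h @ hT) = round_queries h \<and>
     round_coins (h @ hF) = round_coins h @ [False] \<and> round_queries (h @ hF) = round_queries h \<and>
     vreach K w P T (n + length (enc_block blk)) (Fwd d x) (Suc (length pre)) uniform2 (enc_cp c 0) (enc_cp z 0) h =
     1/2 * vreach K w P T n (Fwd BlkEnd True) (Suc (length pre + length (enc_block blk))) uniform2 (enc_cp (c - real (univ_val blk True)) 0) (enc_cp (2 * z) 0) (h @ hT) +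
     1/2 * vreach K w P T n (Fwd BlkEnd False) (Suc (length pre + length (enc_block blk))) uniform2 (enc_cp (c - real (univ_val blk False)) 0) (enc_cp (2 * z) 0) (h @ hF)"
proof -
  obtain a b e f where blk: "blk = (a, b, e, f)" by (cases blk) auto
  have ne: "a \<noteq> []" "b \<noteq> []" "e \<noteq> []" "f \<noteq> []" using assms(3) by (auto simp: block_nonempty_def blk)
  define u where "u = tl (enc_block blk)"
  have eb: "enc_block blk = All # u" by (simp add: u_def blk enc_block_eq)
  have len: "length (enc_block blk) = Suc (length u)" by (simp add: eb)
  have w2: "w = (pre @ [All]) @ u @ post" using assms(2) eb by simp
  have tp: "tape w (Suc (length pre)) = Sym All" using assms(2) eb by (simp add: tape_at)
  have zz: "\<And>i. i \<ge> 5 \<Longrightarrow> enc_cp (2 * z) 0 i = 0" by (simp add: enc_cp_beyond)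
  have run: "\<exists>hs. (\<forall>ob\<in>set hs. unmarked ob) \<and>
     vreach K w P T (n + length u) (Fwd ALP t) (Suc (length (pre @ [All]))) (basis j) (enc_cp c 0) (enc_cp (2 * z) 0) h' =
     vreach K w P T n (Fwd BlkEnd t) (Suc (length (pre @ [All]) + length u)) uniform2 (enc_cp (c - real (univ_val blk t)) 0) (enc_cp (2 * z) 0) (h' @ hs)" if "j < 2" for t j h'
  proof -
    have r: "sweep (Fwd ALP t) (c, 0) u = Some (Fwd BlkEnd t, (c - real (univ_val blk t), 0))"
      using sweep_block_forward[OF ne, of t c] by (simp add: u_def blk univ_val_def)
    have "u \<noteq> []" by (simp add: u_def blk enc_block_eq)
    then show ?thesis using reach_sweep_right[where K=K and P=P and T=T and n=n and h=h', OF r w2 basis_sum2[OF that] zz] by simp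
  qed
  obtain hsT where hsT: "\<forall>ob\<in>set hsT. unmarked ob"
    "vreach K w P T (n + length u) (Fwd ALP True) (Suc (length (pre @ [All]))) (basis 0) (enc_cp c 0) (enc_cp (2 * z) 0)
       (h @ [(to_nat (Fwd ALP True), Suc (Suc (length pre)), (\<lambda>_. 0)(0 := 0))]) =
     vreach K w P T n (Fwd BlkEnd True) (Suc (length (pre @ [All]) + length u)) uniform2 (enc_cp (c - real (univ_val blk True)) 0) (enc_cp (2 * z) 0) ((h @ [(to_nat (Fwd ALP True), Suc (Suc (length pre)), (\<lambda>_. 0)(0 := 0))]) @ hsT)"
    using run[of 0 True "h @ [(to_nat (Fwd ALP True), Suc (Suc (length pre)), (\<lambda>_. 0)(0 := 0))]"] by auto
  obtain hsF where hsF: "\<forall>ob\<in>set hsF. unmarked ob"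
    "vreach K w P T (n + length u) (Fwd ALP False) (Suc (length (pre @ [All]))) (basis 1) (enc_cp c 0) (enc_cp (2 * z) 0)
       (h @ [(to_nat (Fwd ALP False), Suc (Suc (length pre)), (\<lambda>_. 0)(0 := 1))]) =
     vreach K w P T n (Fwd BlkEnd False) (Suc (length (pre @ [All]) + length u)) uniform2 (enc_cp (c - real (univ_val blk False)) 0) (enc_cp (2 * z) 0) ((h @ [(to_nat (Fwd ALP False), Suc (Suc (length pre)), (\<lambda>_. 0)(0 := 1))]) @ hsF)"
    using run[of 1 False "h @ [(to_nat (Fwd ALP False), Suc (Suc (length pre)), (\<lambda>_. 0)(0 := 1))]"] by auto
  have cs: "vreach K w P T (Suc (n + length u)) (Fwd d x) (Suc (length pre)) uniform2 (enc_cp c 0) (enc_cp z 0) h =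
    1/2 * vreach K w P T (n + length u) (Fwd ALP True) (Suc (Suc (length pre))) (basis 0) (enc_cp c 0) (enc_cp (2 * z) 0)
       (h @ [(to_nat (Fwd ALP True), Suc (Suc (length pre)), (\<lambda>_. 0)(0 := 0))]) +
    1/2 * vreach K w P T (n + length u) (Fwd ALP False) (Suc (Suc (length pre))) (basis 1) (enc_cp c 0) (enc_cp (2 * z) 0)
       (h @ [(to_nat (Fwd ALP False), Suc (Suc (length pre)), (\<lambda>_. 0)(0 := 1))])"
    by (rule reach_coin_step[OF assms(1) tp])
  let ?hT = "(to_nat (Fwd ALP True), Suc (Suc (length pre)), (\<lambda>_. 0)(0 := 0)) # hsT"
  let ?hF = "(to_nat (Fwd ALP False), Suc (Suc (length pre)), (\<lambda>_. 0)(0 := 1)) # hsF"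
  have h1: "round_coins (h @ ?hT) = round_coins h @ [True] \<and> round_queries (h @ ?hT) = round_queries h"
    using round_unmarked[OF hsT(1), of "h @ [(to_nat (Fwd ALP True), Suc (Suc (length pre)), (\<lambda>_. 0)(0 := 0))]"] round_coin by simp
  have h2: "round_coins (h @ ?hF) = round_coins h @ [False] \<and> round_queries (h @ ?hF) = round_queries h"
    using round_unmarked[OF hsF(1), of "h @ [(to_nat (Fwd ALP False), Suc (Suc (length pre)), (\<lambda>_. 0)(0 := 1))]"] round_coin by simp
  show ?thesis
    using h1 h2 cs hsT(2) hsF(2) len by (intro exI[of _ ?hT] exI[of _ ?hF]) simp
qed

lemma reach_forward_blocks:
  assumes "bl \<noteq> []" "\<forall>blk\<in>set bl. block_nonempty blk" "d = S1 \<or> d = BlkEnd" "w = pre @ concat (map enc_block bl) @ post"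
    "\<forall>xs h' x'. length xs = length bl \<longrightarrow> round_coins h' = round_coins h @ xs \<longrightarrow> round_queries h' = round_queries h \<longrightarrow>
       F xs \<le> vreach K w P T n (Fwd BlkEnd x') (Suc (length pre + length (concat (map enc_block bl)))) uniform2 (enc_cp (c - real (univ_sum bl xs)) 0) (enc_cp (z * 2 ^ length bl) 0) h'"
  shows "coin_avg (length bl) F \<le> vreach K w P T (n + length (concat (map enc_block bl))) (Fwd d x) (Suc (length pre)) uniform2 (enc_cp c 0) (enc_cp z 0) h"
  using assms
proof (induction bl arbitrary: pre d x c z h F post rule: list_nonempty_induct)
  case (single blk)
  from reach_forward_block[of d w pre blk post h K P T n x c z] single.prems
  obtain hT hF where hh: "round_coins (h @ hT) = round_coins h @ [True]" "round_queries (h @ hT) = round_queries h"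
     "round_coins (h @ hF) = round_coins h @ [False]" "round_queries (h @ hF) = round_queries h" and
     eq: "vreach K w P T (n + length (enc_block blk)) (Fwd d x) (Suc (length pre)) uniform2 (enc_cp c 0) (enc_cp z 0) h =
     1/2 * vreach K w P T n (Fwd BlkEnd True) (Suc (length pre + length (enc_block blk))) uniform2 (enc_cp (c - real (univ_val blk True)) 0) (enc_cp (2 * z) 0) (h @ hT) +
     1/2 * vreach K w P T n (Fwd BlkEnd False) (Suc (length pre + length (enc_block blk))) uniform2 (enc_cp (c - real (univ_val blk False)) 0) (enc_cp (2 * z) 0) (h @ hF)" by auto
  have 1: "F [True] \<le> vreach K w P T n (Fwd BlkEnd True) (Suc (length pre + length (enc_block blk))) uniform2 (enc_cp (c - real (univ_val blk True)) 0) (enc_cp (2 * z) 0) (h @ hT)"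
    using single.prems(4)[rule_format, of "[True]" "h @ hT" True] hh by (simp add: univ_sum_single mult.commute)
  have 2: "F [False] \<le> vreach K w P T n (Fwd BlkEnd False) (Suc (length pre + length (enc_block blk))) uniform2 (enc_cp (c - real (univ_val blk False)) 0) (enc_cp (2 * z) 0) (h @ hF)"
    using single.prems(4)[rule_format, of "[False]" "h @ hF" False] hh by (simp add: univ_sum_single mult.commute)
  show ?case using 1 2 eq by simp
next
  case (cons blk bl)
  have nb: "block_nonempty blk" "\<forall>b\<in>set bl. block_nonempty b" using cons.prems(1) by auto
  have w1: "w = pre @ enc_block blk @ (concat (map enc_block bl) @ post)" using cons.prems(3) by simp
  from reach_forward_block[OF cons.prems(2) w1 nb(1), of h K P T "n + length (concat (map enc_block bl))" x c z]
  obtain hT hF where hh: "round_coins (h @ hT) = round_coins h @ [True]" "round_queries (h @ hT) = round_queries h"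
     "round_coins (h @ hF) = round_coins h @ [False]" "round_queries (h @ hF) = round_queries h" and
     eq: "vreach K w P T (n + length (concat (map enc_block bl)) + length (enc_block blk)) (Fwd d x) (Suc (length pre)) uniform2 (enc_cp c 0) (enc_cp z 0) h =
     1/2 * vreach K w P T (n + length (concat (map enc_block bl))) (Fwd BlkEnd True) (Suc (length pre + length (enc_block blk))) uniform2 (enc_cp (c - real (univ_val blk True)) 0) (enc_cp (2 * z) 0) (h @ hT) +
     1/2 * vreach K w P T (n + length (concat (map enc_block bl))) (Fwd BlkEnd False) (Suc (length pre + length (enc_block blk))) uniform2 (enc_cp (c - real (univ_val blk False)) 0) (enc_cp (2 * z) 0) (h @ hF)" by blast
  have w2: "w = (pre @ enc_block blk) @ concat (map enc_block bl) @ post" using cons.prems(3) by simp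
  have br: "coin_avg (length bl) (\<lambda>xs. F (t # xs)) \<le> vreach K w P T (n + length (concat (map enc_block bl))) (Fwd BlkEnd t) (Suc (length pre + length (enc_block blk))) uniform2 (enc_cp (c - real (univ_val blk t)) 0) (enc_cp (2 * z) 0) h'"
    if ht: "round_coins h' = round_coins h @ [t]" "round_queries h' = round_queries h" for t h'
  proof -
    have hyp: "\<forall>xs h'' x'. length xs = length bl \<longrightarrow> round_coins h'' = round_coins h' @ xs \<longrightarrow> round_queries h'' = round_queries h' \<longrightarrow>
       F (t # xs) \<le> vreach K w P T n (Fwd BlkEnd x') (Suc (length (pre @ enc_block blk) + length (concat (map enc_block bl)))) uniform2 (enc_cp (c - real (univ_val blk t) - real (univ_sum bl xs)) 0) (enc_cp (2 * z * 2 ^ length bl) 0) h''"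
    proof (intro allI impI)
      fix xs h'' x' assume a: "length xs = length bl" "round_coins h'' = round_coins h' @ xs" "round_queries h'' = round_queries h'"
      have "F (t # xs) \<le> vreach K w P T n (Fwd BlkEnd x') (Suc (length pre + length (concat (map enc_block (blk # bl))))) uniform2 (enc_cp (c - real (univ_sum (blk # bl) (t # xs))) 0) (enc_cp (z * 2 ^ length (blk # bl)) 0) h''"
        using cons.prems(4)[rule_format, of "t # xs" h'' x'] a ht by simp
      then show "F (t # xs) \<le> vreach K w P T n (Fwd BlkEnd x') (Suc (length (pre @ enc_block blk) + length (concat (map enc_block bl)))) uniform2 (enc_cp (c - real (univ_val blk t) - real (univ_sum bl xs)) 0) (enc_cp (2 * z * 2 ^ length bl) 0) h''"
        by (simp add: univ_sum_Cons algebra_simps)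
    qed
    show ?thesis
      using cons.IH[where d=BlkEnd and pre="pre @ enc_block blk" and post=post and h=h' and F="\<lambda>xs. F (t # xs)" and x=t and c="c - real (univ_val blk t)" and z="2 * z", OF nb(2) _ w2 hyp]
      by simp
  qed
  have "coin_avg (length (blk # bl)) F = (coin_avg (length bl) (\<lambda>xs. F (True # xs)) + coin_avg (length bl) (\<lambda>xs. F (False # xs))) / 2"
    by simp
  also have "\<dots> \<le> 1/2 * vreach K w P T (n + length (concat (map enc_block bl))) (Fwd BlkEnd True) (Suc (length pre + length (enc_block blk))) uniform2 (enc_cp (c - real (univ_val blk True)) 0) (enc_cp (2 * z) 0) (h @ hT) +
     1/2 * vreach K w P T (n + length (concat (map enc_block bl))) (Fwd BlkEnd False) (Suc (length pre + length (enc_block blk))) uniform2 (enc_cp (c - real (univ_val blk False)) 0) (enc_cp (2 * z) 0) (h @ hF)"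
    using br[of "h @ hT" True] br[of "h @ hF" False] hh by simp
  also have "\<dots> = vreach K w P T (n + length (concat (map enc_block (blk # bl)))) (Fwd d x) (Suc (length pre)) uniform2 (enc_cp c 0) (enc_cp z 0) h"
    using eq by (simp add: add.assoc add.commute[of "length (enc_block blk)"])
  finally show ?case .
qed

lemma exist_sum_snoc: "exist_sum (bl @ [blk]) Y = exist_sum bl Y + exist_val blk (Y (length bl))"
  by (simp add: exist_sum_def nth_append)

lemma exist_sum_cong: "(\<And>i. i < length bl \<Longrightarrow> Y i = Y' i) \<Longrightarrow> exist_sum bl Y = exist_sum bl Y'"
  by (simp add: exist_sum_def)

lemma reach_backward_block:
  assumes "block_nonempty blk" "w = pre @ enc_block blk @ post" "\<And>i. i \<ge> 5 \<Longrightarrow> zz i = 0"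
  shows "\<exists>hs p'. round_coins (h @ hs) = round_coins h \<and> round_queries (h @ hs) = Suc (round_queries h) \<and>
    vreach K w P T (n + length (enc_block blk)) BwdNext (length pre + length (enc_block blk)) uniform2 (enc_cp c p) zz h =
    vreach K w P T n BwdNext (length pre) uniform2 (enc_cp (c - real (exist_val blk (P h = 0))) p') zz (h @ hs)"
proof -
  obtain a b e f where blk: "blk = (a, b, e, f)" by (cases blk) auto
  have ne: "a \<noteq> []" "b \<noteq> []" "e \<noteq> []" "f \<noteq> []" using assms(1) by (auto simp: block_nonempty_def blk)
  define u where "u = [All, LP] @ enc_bits a @ [Cm] @ enc_bits b @ [RP, Ex, LP] @ enc_bits e @ [Cm] @ enc_bits f"
  have eb: "enc_block blk = u @ [RP]" by (simp add: u_def blk enc_block_eq)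
  have w1: "w = (pre @ u) @ RP # post" using assms(2) eb by simp
  have tp: "tape w (Suc (length (pre @ u))) = Sym RP" using w1 by (rule tape_at)
  define ch where "ch = (P h = 0)"
  have st: "vstep BwdNext (Sym RP) (P h) (\<lambda>_. 0) = (BwdF1 ch, -1)" by (simp add: ch_def)
  have opq: "counter_op BwdNext RP (c, p) = (c, 1)" by (simp add: counter_op_def aff_eval_def)
  define h1 where "h1 = h @ [(to_nat (BwdF1 ch), length pre + length u, \<lambda>_. 0)]"
  have query: "vreach K w P T (Suc (n + length u)) BwdNext (Suc (length (pre @ u))) uniform2 (enc_cp c p) zz h =
     vreach K w P T (n + length u) (BwdF1 ch) (length pre + length u) uniform2 (enc_cp c 1) zz h1"
  proof -
    have e: "nat (int (Suc (length (pre @ u))) + -1) = length pre + length u" by simp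
    show ?thesis
      using reach_sym_step[where K=K and T=T and n="n + length u" and P=P and h=h and c=c and p=p and zz=zz,
          OF _ _ _ tp _ st uniform2_sum assms(3)]
      unfolding e h1_def by (simp add: opq)
  qed
  have r2: "sweep (BwdF1 ch) (c, 1) (rev u) = Some (BwdNext, (c - real (exist_val blk ch), if ch then 2 ^ length e else 1))"
    using sweep_block_backward[OF ne, of ch c] by (simp add: exist_val_def u_def blk enc_block_eq)
  have bwd: "backward_state (BwdF1 ch)" by (simp add: backward_state_def)
  have w2: "w = pre @ u @ RP # post" using w1 by simp
  obtain hs1 where hs1: "\<forall>ob\<in>set hs1. unmarked ob"
    "vreach K w P T (n + length u) (BwdF1 ch) (length pre + length u) uniform2 (enc_cp c 1) zz h1 =
     vreach K w P T n BwdNext (length pre) uniform2 (enc_cp (c - real (exist_val blk ch)) (if ch then 2 ^ length e else 1)) zz (h1 @ hs1)"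
    using reach_sweep_left[where K=K and P=P and T=T and n=n and h=h1 and zz=zz, OF r2 bwd w2 uniform2_sum assms(3)]
    by (auto simp: u_def)
  have "round_coins (h1 @ hs1) = round_coins h" "round_queries (h1 @ hs1) = Suc (round_queries h)"
    using round_unmarked[OF hs1(1), of h1] round_query[of h ch "length pre + length u" "\<lambda>_. 0"]
    unfolding h1_def by auto
  moreover have "n + length (enc_block blk) = Suc (n + length u)" "length pre + length (enc_block blk) = Suc (length (pre @ u))"
    by (simp_all add: eb)
  ultimately show ?thesis
    using query hs1(2) unfolding h1_def ch_def
    by (intro exI[of _ "(to_nat (BwdF1 (P h = 0)), length pre + length u, \<lambda>_. 0) # hs1"]
        exI[of _ "if P h = 0 then 2 ^ length e else 1"]) (simp del: reach.simps)
qed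

lemma reach_backward_blocks:
  assumes "\<forall>blk\<in>set bl. block_nonempty blk" "w = pre @ concat (map enc_block bl) @ post" "\<And>i. i \<ge> 5 \<Longrightarrow> zz i = 0"
  shows "\<exists>Y hs p'. round_coins (h @ hs) = round_coins h \<and> round_queries (h @ hs) = round_queries h + length bl \<and>
    (\<forall>Yh. (\<forall>h'. round_coins h' = round_coins h \<longrightarrow> P h' = (if Yh (round_queries h') then 0 else 1)) \<longrightarrow>
        (\<forall>i<length bl. Y i = Yh (round_queries h + length bl - 1 - i))) \<and>
    vreach K w P T (n + length (concat (map enc_block bl))) BwdNext (length pre + length (concat (map enc_block bl))) uniform2 (enc_cp c p) zz h =
    vreach K w P T n BwdNext (length pre) uniform2 (enc_cp (c - real (exist_sum bl Y)) p') zz (h @ hs)"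
  using assms(1,2)
proof (induction bl arbitrary: post c p h rule: rev_induct)
  case Nil
  show ?case by (rule exI[of _ "\<lambda>_. True"], rule exI[of _ "[]"], rule exI[of _ p]) (simp add: exist_sum_def)
next
  case (snoc blk bl)
  define C where "C = concat (map enc_block bl)"
  define ch where "ch = (P h = 0)"
  have w1: "w = (pre @ C) @ enc_block blk @ post" using snoc.prems(2) by (simp add: C_def)
  obtain hs1 p1 where hs1: "round_coins (h @ hs1) = round_coins h" "round_queries (h @ hs1) = Suc (round_queries h)"
    "vreach K w P T (n + length C + length (enc_block blk)) BwdNext (length (pre @ C) + length (enc_block blk)) uniform2 (enc_cp c p) zz h =
     vreach K w P T (n + length C) BwdNext (length (pre @ C)) uniform2 (enc_cp (c - real (exist_val blk ch)) p1) zz (h @ hs1)"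
    using reach_backward_block[where K = K and zz = zz and n = "n + length C" and P = P and T = T and c = c and p = p
        and h = h, OF _ w1 assms(3)] snoc.prems(1)
    unfolding ch_def by auto
  have w3: "w = pre @ C @ (enc_block blk @ post)" using snoc.prems(2) by (simp add: C_def)
  have nb: "\<forall>b\<in>set bl. block_nonempty b" using snoc.prems(1) by auto
  obtain Y' hs2 p2 where IH: "round_coins ((h @ hs1) @ hs2) = round_coins (h @ hs1)"
    "round_queries ((h @ hs1) @ hs2) = round_queries (h @ hs1) + length bl"
    "\<forall>Yh. (\<forall>h'. round_coins h' = round_coins (h @ hs1) \<longrightarrow> P h' = (if Yh (round_queries h') then 0 else 1)) \<longrightarrow>
        (\<forall>i<length bl. Y' i = Yh (round_queries (h @ hs1) + length bl - 1 - i))"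
    "vreach K w P T (n + length C) BwdNext (length pre + length C) uniform2 (enc_cp (c - real (exist_val blk ch)) p1) zz (h @ hs1) =
     vreach K w P T n BwdNext (length pre) uniform2 (enc_cp (c - real (exist_val blk ch) - real (exist_sum bl Y')) p2) zz ((h @ hs1) @ hs2)"
    using snoc.IH[where post="enc_block blk @ post" and c="c - real (exist_val blk ch)" and p=p1 and h="h @ hs1", OF nb]
      w3 unfolding C_def by blast
  define Y where "Y = Y'(length bl := ch)"
  have ys: "exist_sum (bl @ [blk]) Y = exist_sum bl Y' + exist_val blk ch"
    by (simp add: exist_sum_snoc Y_def) (rule exist_sum_cong, simp)
  show ?case
  proof (intro exI[of _ Y] exI[of _ "hs1 @ hs2"] exI[of _ p2] conjI)
    show "round_coins (h @ hs1 @ hs2) = round_coins h" using IH(1) hs1(1) by simp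
    show "round_queries (h @ hs1 @ hs2) = round_queries h + length (bl @ [blk])" using IH(2) hs1(2) by simp
    show "\<forall>Yh. (\<forall>h'. round_coins h' = round_coins h \<longrightarrow> P h' = (if Yh (round_queries h') then 0 else 1)) \<longrightarrow>
        (\<forall>i<length (bl @ [blk]). Y i = Yh (round_queries h + length (bl @ [blk]) - 1 - i))"
    proof (intro allI impI)
      fix Yh i
      assume H: "\<forall>h'. round_coins h' = round_coins h \<longrightarrow> P h' = (if Yh (round_queries h') then 0 else 1)"
        and i: "i < length (bl @ [blk])"
      show "Y i = Yh (round_queries h + length (bl @ [blk]) - 1 - i)"
      proof (cases "i = length bl")
        case True
        have "P h = (if Yh (round_queries h) then 0 else 1)" using H by simp
        then show ?thesis using True by (simp add: Y_def ch_def)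
      next
        case False
        then have "i < length bl" using i by simp
        moreover have "Y' i = Yh (round_queries (h @ hs1) + length bl - 1 - i)" using IH(3) H hs1(1) \<open>i < length bl\<close> by simp
        ultimately show ?thesis using hs1(2) False by (simp add: Y_def)
      qed
    qed
    have "vreach K w P T (n + length (concat (map enc_block (bl @ [blk])))) BwdNext (length pre + length (concat (map enc_block (bl @ [blk])))) uniform2 (enc_cp c p) zz h =
       vreach K w P T (n + length C + length (enc_block blk)) BwdNext (length (pre @ C) + length (enc_block blk)) uniform2 (enc_cp c p) zz h"
      by (simp add: C_def add.assoc)
    also have "\<dots> = vreach K w P T n BwdNext (length pre) uniform2 (enc_cp (c - real (exist_val blk ch) - real (exist_sum bl Y')) p2) zz ((h @ hs1) @ hs2)"
      using hs1(3) IH(4) by (simp del: reach.simps)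
    also have "\<dots> = vreach K w P T n BwdNext (length pre) uniform2 (enc_cp (c - real (exist_sum (bl @ [blk]) Y)) p2) zz (h @ hs1 @ hs2)"
      using ys by (simp add: algebra_simps del: reach.simps)
    finally show "vreach K w P T (n + length (concat (map enc_block (bl @ [blk])))) BwdNext (length pre + length (concat (map enc_block (bl @ [blk])))) uniform2 (enc_cp c p) zz h =
      vreach K w P T n BwdNext (length pre) uniform2 (enc_cp (c - real (exist_sum (bl @ [blk]) Y)) p2) zz (h @ hs1 @ hs2)" .
  qed
qed

(* Y is the vector of the prover's answers in a round with coins xs: if P answers the k-th query
   by Yh k, then block i receives Yh (m - 1 - i), since the blocks are queried from right to left. *)
definition answers_follow :: "prover \<Rightarrow> nat \<Rightarrow> bool list \<Rightarrow> (nat \<Rightarrow> bool) \<Rightarrow> bool" where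
  "answers_follow P m xs Y \<longleftrightarrow> (\<forall>Yh. (\<forall>h''. round_coins h'' = xs \<longrightarrow> P h'' = (if Yh (round_queries h'') then 0 else 1)) \<longrightarrow>
      (\<forall>i<m. Y i = Yh (m - 1 - i)))"

definition wf_instance :: "bool list \<Rightarrow> block list \<Rightarrow> bool" where
  "wf_instance S bl \<longleftrightarrow> S \<noteq> [] \<and> bl \<noteq> [] \<and> (\<forall>blk\<in>set bl. block_nonempty blk)"

definition round_start :: "(nat \<Rightarrow> real) \<Rightarrow> (nat \<Rightarrow> real) \<Rightarrow> (nat \<Rightarrow> real) \<Rightarrow> obs list \<Rightarrow> bool" where
  "round_start a b zz h \<longleftrightarrow> a 0 + a 1 = 1 \<and> (\<Sum>k<5. b k) = 1 \<and> (\<Sum>k<5. zz k) = 1 \<and> round_coins h = [] \<and> round_queries h = 0"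

definition round_bound :: "nat \<Rightarrow> kg_sym list \<Rightarrow> prover \<Rightarrow> nat set \<Rightarrow> nat \<Rightarrow> real \<Rightarrow> bool" where
  "round_bound K w P T n B \<longleftrightarrow>
     (\<forall>a b zz h. round_start a b zz h \<longrightarrow> B \<le> vreach K w P T (Suc n) Start 0 a b zz h)"

lemma reach_backward_phase:
  assumes w: "w = enc_bits S @ concat (map enc_block bl)" and S: "S \<noteq> []"
    and ne: "\<forall>blk\<in>set bl. block_nonempty blk" and zz: "\<And>i. i \<ge> 5 \<Longrightarrow> zz i = 0"
    and h: "round_queries h = 0"
  shows "\<exists>Y h'. round_coins h' = round_coins h \<and> round_queries h' = length bl \<and>
    answers_follow P (length bl) (round_coins h) Y \<and>
    vreach K w P T (n + 1 + length w) (Fwd BlkEnd x) (Suc (length w)) uniform2 (enc_cp c 0) zz h =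
    vreach K w P T n BwdS 0 uniform2 (enc_cp (c - real (exist_sum bl Y)) 0) zz h'"
proof -
  define C where "C = concat (map enc_block bl)"
  have lw: "length w = length S + length C" by (simp add: w C_def)
  define h2 where "h2 = h @ [(to_nat BwdNext, length w, \<lambda>_. 0::nat)]"
  have "unmarked (to_nat BwdNext, length w, \<lambda>_. 0::nat)" by (auto simp: unmarked_def marker_states_def)
  then have h2: "round_coins h2 = round_coins h" "round_queries h2 = 0"
    using round_unmarked1[of _ h] h by (auto simp: h2_def)
  have rend: "vreach K w P T (n + 1 + length w) (Fwd BlkEnd x) (Suc (length w)) uniform2 (enc_cp c 0) zz h =
     vreach K w P T (n + length S + length C) BwdNext (length w) uniform2 (enc_cp c 0) zz h2"
  proof -
    have e: "n + 1 + length w = Suc (n + length S + length C)" by (simp add: lw)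
    show ?thesis
      unfolding e
      using reach_rend_step[where x=x and K=K and P=P and T=T and n="n + length S + length C" and h=h and zz=zz and b="enc_cp c 0",
          OF tape_end[of w] _ uniform2_sum enc_cp_beyond zz]
      by (simp add: h2_def del: reach.simps)
  qed
  obtain Y hs p' where blocks: "round_coins (h2 @ hs) = round_coins h2" "round_queries (h2 @ hs) = round_queries h2 + length bl"
    "\<forall>Yh. (\<forall>h'. round_coins h' = round_coins h2 \<longrightarrow> P h' = (if Yh (round_queries h') then 0 else 1)) \<longrightarrow>
        (\<forall>i<length bl. Y i = Yh (round_queries h2 + length bl - 1 - i))"
    "vreach K w P T (n + length S + length C) BwdNext (length (enc_bits S) + length C) uniform2 (enc_cp c 0) zz h2 =
     vreach K w P T (n + length S) BwdNext (length (enc_bits S)) uniform2 (enc_cp (c - real (exist_sum bl Y)) p') zz (h2 @ hs)"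
    using reach_backward_blocks[where K=K and P=P and T=T and n="n + length S" and h=h2 and c=c and p=0 and zz=zz
        and w=w and pre="enc_bits S" and post="[]", OF ne _ zz] w unfolding C_def by auto
  have r3: "sweep BwdNext (c - real (exist_sum bl Y), p') (rev (enc_bits S)) = Some (BwdS, (c - real (exist_sum bl Y), 0))"
    by (rule sweep_BwdNext_S[OF S])
  have bwd: "backward_state BwdNext" by (simp add: backward_state_def)
  obtain hs4 where hs4: "\<forall>ob\<in>set hs4. unmarked ob"
    "vreach K w P T (n + length S) BwdNext (length (enc_bits S)) uniform2 (enc_cp (c - real (exist_sum bl Y)) p') zz (h2 @ hs) =
     vreach K w P T n BwdS 0 uniform2 (enc_cp (c - real (exist_sum bl Y)) 0) zz ((h2 @ hs) @ hs4)"
    using reach_sweep_left[where K=K and P=P and T=T and n=n and h="h2 @ hs" and zz=zz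
        and w=w and pre="[]" and post=C, OF r3 bwd _ uniform2_sum zz] S w unfolding C_def by auto
  show ?thesis
  proof (intro exI conjI)
    show "round_coins ((h2 @ hs) @ hs4) = round_coins h" "round_queries ((h2 @ hs) @ hs4) = length bl"
      using round_unmarked[OF hs4(1), of "h2 @ hs"] blocks(1,2) h2 by auto
    show "answers_follow P (length bl) (round_coins h) Y"
      unfolding answers_follow_def using blocks(3) h2 by simp
    show "vreach K w P T (n + 1 + length w) (Fwd BlkEnd x) (Suc (length w)) uniform2 (enc_cp c 0) zz h =
      vreach K w P T n BwdS 0 uniform2 (enc_cp (c - real (exist_sum bl Y)) 0) zz ((h2 @ hs) @ hs4)"
      using rend blocks(4) hs4(2) lw by (simp del: reach.simps)
  qed
qed

lemma reach_round:
  assumes w: "w = enc_bits S @ concat (map enc_block bl)" and wf: "wf_instance S bl"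
    and st: "round_start a b zz h"
    and hyp: "\<forall>xs Y h'. length xs = length bl \<longrightarrow> round_coins h' = xs \<longrightarrow> round_queries h' = length bl \<longrightarrow> answers_follow P (length bl) xs Y \<longrightarrow>
       F xs \<le> vreach K w P T n BwdS 0 uniform2 (enc_cp (real (bits_val S) - real (univ_sum bl xs) - real (exist_sum bl Y)) 0) (enc_cp (real K * 2 ^ length bl) 0) h'"
  shows "coin_avg (length bl) F \<le> vreach K w P T (n + (2 * length w + 2)) Start 0 a b zz h"
proof -
  have S: "S \<noteq> []" and bl: "bl \<noteq> []" and ne: "\<forall>blk\<in>set bl. block_nonempty blk"
    using wf by (auto simp: wf_instance_def)
  have a: "a 0 + a 1 = 1" "(\<Sum>k<5. b k) = 1" "(\<Sum>k<5. zz k) = 1" and h: "round_coins h = []" "round_queries h = 0"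
    using st by (auto simp: round_start_def)
  define C where "C = concat (map enc_block bl)"
  have lw: "length w = length S + length C" by (simp add: w C_def)
  define h1 where "h1 = h @ [(to_nat (Fwd S0 False), 1, \<lambda>_. 0::nat)]"
  have nm1: "unmarked (to_nat (Fwd S0 False), 1, \<lambda>_. 0::nat)" by (auto simp: unmarked_def marker_states_def)
  have hh1: "round_coins h1 = []" "round_queries h1 = 0" using round_unmarked1[OF nm1, of h] h by (auto simp: h1_def)
  have e0: "n + (2 * length w + 2) = Suc (n + 1 + length C + length C + length S + length S)" by (simp add: lw)
  have start: "vreach K w P T (n + (2 * length w + 2)) Start 0 a b zz h =
    vreach K w P T (n + 1 + length C + length C + length S + length S) (Fwd S0 False) 1 uniform2 (enc_cp 0 0) (enc_cp (real K) 0) h1"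
    unfolding e0 h1_def by (rule reach_start_step[OF a])
  have w1: "w = [] @ enc_bits S @ C" by (simp add: w C_def)
  have r1: "sweep (Fwd S0 False) (0, 0) (enc_bits S) = Some (Fwd S1 False, (real (bits_val S), 0))"
    using sweep_S0[OF S, of False 0 0] by simp
  have hz: "\<And>i. i \<ge> 5 \<Longrightarrow> enc_cp (real K) 0 i = 0" by (simp add: enc_cp_beyond)
  obtain hs1 where hs1: "\<forall>ob\<in>set hs1. unmarked ob"
    "vreach K w P T (n + 1 + length C + length C + length S + length S) (Fwd S0 False) 1 uniform2 (enc_cp 0 0) (enc_cp (real K) 0) h1 =
     vreach K w P T (n + 1 + length C + length C + length S) (Fwd S1 False) (Suc (length S)) uniform2 (enc_cp (real (bits_val S)) 0) (enc_cp (real K) 0) (h1 @ hs1)"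
    using reach_sweep_right[where K=K and P=P and T=T and n="n + 1 + length C + length C + length S" and h=h1 and zz="enc_cp (real K) 0", OF r1 w1 uniform2_sum hz] S
    by (auto simp: add.assoc)
  have hh2: "round_coins (h1 @ hs1) = []" "round_queries (h1 @ hs1) = 0" using round_unmarked[OF hs1(1), of h1] hh1 by auto
  have w2: "w = enc_bits S @ concat (map enc_block bl) @ []" by (simp add: w)
  have cont: "\<forall>xs h' x'. length xs = length bl \<longrightarrow> round_coins h' = round_coins (h1 @ hs1) @ xs \<longrightarrow> round_queries h' = round_queries (h1 @ hs1) \<longrightarrow>
       F xs \<le> vreach K w P T (n + 1 + length C + length S) (Fwd BlkEnd x') (Suc (length (enc_bits S) + length (concat (map enc_block bl)))) uniform2 (enc_cp (real (bits_val S) - real (univ_sum bl xs)) 0) (enc_cp (real K * 2 ^ length bl) 0) h'"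
  proof (intro allI impI)
    fix xs h' x'
    assume x: "length xs = length bl" "round_coins h' = round_coins (h1 @ hs1) @ xs" "round_queries h' = round_queries (h1 @ hs1)"
    then have coins: "round_coins h' = xs" and queries: "round_queries h' = 0" using hh2 by simp_all
    obtain Y h'' where Y: "round_coins h'' = xs" "round_queries h'' = length bl" "answers_follow P (length bl) xs Y"
      "vreach K w P T (n + 1 + length w) (Fwd BlkEnd x') (Suc (length w)) uniform2 (enc_cp (real (bits_val S) - real (univ_sum bl xs)) 0) (enc_cp (real K * 2 ^ length bl) 0) h' =
       vreach K w P T n BwdS 0 uniform2 (enc_cp (real (bits_val S) - real (univ_sum bl xs) - real (exist_sum bl Y)) 0) (enc_cp (real K * 2 ^ length bl) 0) h''"
      using reach_backward_phase[where zz="enc_cp (real K * 2 ^ length bl) 0" and c="real (bits_val S) - real (univ_sum bl xs)"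
          and P=P and K=K and T=T and n=n and x=x', OF w S ne enc_cp_beyond queries] coins
      by blast
    have "F xs \<le> vreach K w P T (n + 1 + length w) (Fwd BlkEnd x') (Suc (length w)) uniform2 (enc_cp (real (bits_val S) - real (univ_sum bl xs)) 0) (enc_cp (real K * 2 ^ length bl) 0) h'"
      using hyp[rule_format, OF x(1) Y(1,2,3)] Y(4) by (simp del: reach.simps)
    then show "F xs \<le> vreach K w P T (n + 1 + length C + length S) (Fwd BlkEnd x') (Suc (length (enc_bits S) + length (concat (map enc_block bl)))) uniform2 (enc_cp (real (bits_val S) - real (univ_sum bl xs)) 0) (enc_cp (real K * 2 ^ length bl) 0) h'"
      by (simp add: lw C_def add.commute add.left_commute del: reach.simps)
  qed
  have "coin_avg (length bl) F \<le> vreach K w P T (n + 1 + length C + length S + length (concat (map enc_block bl))) (Fwd S1 False) (Suc (length (enc_bits S))) uniform2 (enc_cp (real (bits_val S)) 0) (enc_cp (real K) 0) (h1 @ hs1)"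
    by (rule reach_forward_blocks[OF bl ne _ w2 cont]) simp
  also have "\<dots> = vreach K w P T (n + 1 + length C + length C + length S) (Fwd S1 False) (Suc (length S)) uniform2 (enc_cp (real (bits_val S)) 0) (enc_cp (real K) 0) (h1 @ hs1)"
  proof -
    have eq: "n + 1 + length C + length S + length (concat (map enc_block bl)) = n + 1 + length C + length C + length S"
      by (simp add: C_def)
    show ?thesis by (simp only: eq length_enc_bits)
  qed
  also have "\<dots> = vreach K w P T (n + 1 + length C + length C + length S + length S) (Fwd S0 False) 1 uniform2 (enc_cp 0 0) (enc_cp (real K) 0) h1"
    by (rule hs1(2)[symmetric])
  also have "\<dots> = vreach K w P T (n + (2 * length w + 2)) Start 0 a b zz h"
    by (rule start[symmetric])
  finally show ?thesis .
qed

lemma kg_sum_split: "(\<Sum>i<length bl. case bl ! i of (a, b, e, f) \<Rightarrow>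
    (if x i then bits_val a else bits_val b) + (if y i then bits_val e else bits_val f)) =
    univ_sum bl (map x [0..<length bl]) + exist_sum bl y"
proof -
  have "(\<Sum>i<length bl. case bl ! i of (a, b, e, f) \<Rightarrow>
    (if x i then bits_val a else bits_val b) + (if y i then bits_val e else bits_val f)) =
    (\<Sum>i<length bl. univ_val (bl ! i) (x i) + exist_val (bl ! i) (y i))"
    by (intro sum.cong refl) (auto simp: univ_val_def exist_val_def split: prod.splits)
  also have "\<dots> = univ_sum bl (map x [0..<length bl]) + exist_sum bl y"
    by (simp add: sum.distrib univ_sum_def exist_sum_def)
  finally show ?thesis .
qed

lemma reach_acc_coin_lower:
  assumes "round_bound K w P T n B" and "0 \<le> z"
  shows "1 / (2 * z + 1) * (if to_nat Acc \<in> T then 1 else 0) + 2 * z / (2 * z + 1) * B \<le>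
    vreach K w P T (Suc (Suc n)) AccCoin 0 uniform2 (enc_cp 0 0) (enc_cp z 0) h"
proof -
  let ?restart = "\<lambda>j. vreach K w P T (Suc n) Start 0 uniform2 (enc_cp 0 0) (basis j)
                       (h @ [(to_nat Start, 0, (\<lambda>_. 0)(2 := j))])"
  have restart: "B \<le> ?restart j" if "j < 2" for j
  proof -
    have "round_start uniform2 (enc_cp 0 0) (basis j) (h @ [(to_nat Start, 0, (\<lambda>_. 0)(2 := j))])"
      unfolding round_start_def using uniform2_sum sum_enc_cp sum_basis[of j] that round_restart by auto
    then show ?thesis using assms(1) unfolding round_bound_def by blast
  qed
  have "2 * z / (2 * z + 1) * B = z / (2 * z + 1) * (B + B)" by (simp add: field_simps)
  also have "\<dots> \<le> z / (2 * z + 1) * (?restart 0 + ?restart 1)"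
    using restart[of 0] restart[of 1] assms(2) by (intro mult_left_mono add_mono) auto
  finally show ?thesis
    using reach_acc_coin_step[where b = "enc_cp 0 0", OF uniform2_sum enc_cp_beyond] assms(2)
    by (simp del: reach.simps)
qed

lemma reach_test_reject_lower:
  assumes "\<forall>h'. L \<le> vreach K w P (rejs (kg_verifier K)) (Suc (Suc n0)) AccCoin 0 uniform2 (enc_cp 0 0) zz h'"
    and "L \<le> 1" "\<And>i. i \<ge> 5 \<Longrightarrow> zz i = 0" "\<bar>c\<bar> \<ge> 1"
  shows "2/3 + L/3 \<le> vreach K w P (rejs (kg_verifier K)) (Suc (Suc (Suc n0))) BwdS 0 uniform2 (enc_cp c 0) zz h"
proof -
  define t where "t = 1 / (2 * \<bar>c\<bar> + 1)"
  define A where "A = vreach K w P (rejs (kg_verifier K)) (Suc (Suc n0)) AccCoin 0 uniform2 (enc_cp 0 0) zz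
       (h @ [(to_nat AccCoin, 0, (\<lambda>_. 0)(1 := 4))])"
  have eq: "vreach K w P (rejs (kg_verifier K)) (Suc (Suc (Suc n0))) BwdS 0 uniform2 (enc_cp c 0) zz h =
     (2 * \<bar>c\<bar> / (2 * \<bar>c\<bar> + 1)) * 1 + t * A"
    unfolding t_def A_def using reach_test_step[where K=K and w=w and P=P and T="rejs (kg_verifier K)" and m="Suc n0" and c=c and h=h and zz=zz, OF uniform2_sum assms(3)] by (simp add: kg_verifier_def)
  have e1: "2 * \<bar>c\<bar> / (2 * \<bar>c\<bar> + 1) = 1 - t" unfolding t_def by (simp add: field_simps)
  have t0: "0 \<le> t" "t \<le> 1/3" unfolding t_def using assms(4) by (auto simp: field_simps)
  have LA: "L \<le> A" unfolding A_def using assms(1) by blast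
  have m1: "t * L \<le> t * A" using t0 LA by (simp add: mult_left_mono)
  have m2: "0 \<le> (1/3 - t) * (1 - L)" using t0 assms(2) by (intro mult_nonneg_nonneg) auto
  have "(1/3 - t) * (1 - L) = 1/3 - L/3 - t + t * L" by (simp add: field_simps)
  then have m3: "0 \<le> 1/3 - L/3 - t + t * L" using m2 by linarith
  show ?thesis unfolding eq e1 using m1 m3 by argo
qed

lemma reach_test_pass_lower:
  assumes "\<forall>h'. L \<le> vreach K w P T (Suc (Suc n0)) AccCoin 0 uniform2 (enc_cp 0 0) zz h'"
    and "\<And>i. i \<ge> 5 \<Longrightarrow> zz i = 0"
  shows "L \<le> vreach K w P T (Suc (Suc (Suc n0))) BwdS 0 uniform2 (enc_cp 0 0) zz h"
  using reach_test_step[where K=K and w=w and P=P and T=T and m="Suc n0" and c=0 and h=h and zz=zz, OF uniform2_sum assms(2)] assms(1) by (simp del: reach.simps)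

lemma round_reject_lower:
  assumes w: "w = enc_bits S @ concat (map enc_block bl)" and wf: "wf_instance S bl" and nk: "\<not> kg_true S bl"
    and z: "z = real K * 2 ^ length bl" and B: "0 \<le> B" "B \<le> 1"
    and hyp: "round_bound K w P (rejs (kg_verifier K)) n B"
  shows "round_bound K w P (rejs (kg_verifier K)) (n + (2 * length w + 4))
           ((2/3) / 2 ^ length bl + (1 - (2/3) / 2 ^ length bl) * (2 * z / (2 * z + 1) * B))"
proof -
  define m where "m = length bl"
  define L where "L = 2 * z / (2 * z + 1) * B"
  have z0: "0 \<le> z" by (simp add: z)
  have L1: "L \<le> 1" "0 \<le> L"
  proof -
    have "2 * z / (2 * z + 1) \<le> 1" "0 \<le> 2 * z / (2 * z + 1)" using z0 by auto
    then show "L \<le> 1" "0 \<le> L" unfolding L_def using B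
      by (simp_all only: mult_le_one mult_nonneg_nonneg)
  qed
  have zz: "\<And>i. i \<ge> 5 \<Longrightarrow> enc_cp z 0 i = 0" by (simp add: enc_cp_beyond)
  have AL: "\<forall>h'. L \<le> vreach K w P (rejs (kg_verifier K)) (Suc (Suc n)) AccCoin 0 uniform2 (enc_cp 0 0) (enc_cp z 0) h'"
    using reach_acc_coin_lower[OF hyp z0] by (simp add: L_def kg_verifier_def del: reach.simps)
  from nk obtain x where x: "\<forall>y. bits_val S \<noteq> (\<Sum>i<length bl. case bl ! i of (a, b, e, f) \<Rightarrow>
        (if x i then bits_val a else bits_val b) + (if y i then bits_val e else bits_val f))"
    unfolding kg_true_def by blast
  define xs0 where "xs0 = map x [0..<m]"
  have bad: "bits_val S \<noteq> univ_sum bl xs0 + exist_sum bl Y" for Y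
    using x[rule_format, of Y] kg_sum_split[where bl=bl and x=x and y=Y] by (simp add: xs0_def m_def)
  (* Only the coin sequence xs0 is sure to be caught; every other one is charged the bound L. *)
  define F where "F = (\<lambda>xs. if xs = xs0 then 2/3 + L/3 else L)"
  have "(2/3) / 2 ^ m + (1 - (2/3) / 2 ^ m) * L \<le> vreach K w P (rejs (kg_verifier K)) (Suc (n + (2 * length w + 4))) Start 0 a b zz h"
    if st: "round_start a b zz h" for a b zz h
  proof -
    have "coin_avg m F \<le> vreach K w P (rejs (kg_verifier K)) (Suc (Suc (Suc n)) + (2 * length w + 2)) Start 0 a b zz h"
      unfolding m_def
    proof (rule reach_round[OF w wf st])
      show "\<forall>xs Y h'. length xs = length bl \<longrightarrow> round_coins h' = xs \<longrightarrow> round_queries h' = length bl \<longrightarrow> answers_follow P (length bl) xs Y \<longrightarrow>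
         F xs \<le> vreach K w P (rejs (kg_verifier K)) (Suc (Suc (Suc n))) BwdS 0 uniform2 (enc_cp (real (bits_val S) - real (univ_sum bl xs) - real (exist_sum bl Y)) 0) (enc_cp (real K * 2 ^ length bl) 0) h'"
      proof (intro allI impI)
        fix xs Y h'
        define c where "c = real (bits_val S) - real (univ_sum bl xs) - real (exist_sum bl Y)"
        have "xs = xs0 \<Longrightarrow> c \<noteq> 0"
          using bad[of Y] unfolding c_def by (metis eq_iff_diff_eq_0 diff_diff_eq of_nat_add of_nat_eq_iff)
        then have "F xs \<le> (if c = 0 then L else 2/3 + L/3)" using L1 by (auto simp: F_def)
        also have "\<dots> \<le> vreach K w P (rejs (kg_verifier K)) (Suc (Suc (Suc n))) BwdS 0 uniform2 (enc_cp c 0) (enc_cp z 0) h'"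
          using reach_test_reject_lower[OF AL L1(1) zz] reach_test_pass_lower[OF AL zz] abs_ge_1_of_nat_diff[OF c_def]
          by auto
        finally show "F xs \<le> vreach K w P (rejs (kg_verifier K)) (Suc (Suc (Suc n))) BwdS 0 uniform2 (enc_cp (real (bits_val S) - real (univ_sum bl xs) - real (exist_sum bl Y)) 0) (enc_cp (real K * 2 ^ length bl) 0) h'"
          unfolding c_def z .
      qed
    qed
    moreover have "L + (2/3 + L/3 - L) / 2 ^ m \<le> coin_avg m F"
      by (rule coin_avg_ge_bad) (use L1 in \<open>auto simp: F_def xs0_def\<close>)
    moreover have "L + (2/3 + L/3 - L) / 2 ^ m = (2/3) / 2 ^ m + (1 - (2/3) / 2 ^ m) * L"
      by (simp add: field_simps)
    moreover have "Suc (n + (2 * length w + 4)) = Suc (Suc (Suc n)) + (2 * length w + 2)" by simp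
    ultimately show ?thesis by (simp only:)
  qed
  then show ?thesis unfolding round_bound_def L_def m_def by blast
qed

definition honest_choice :: "bool list \<Rightarrow> block list \<Rightarrow> bool list \<Rightarrow> nat \<Rightarrow> bool" where
  "honest_choice S bl xs = (SOME y. bits_val S = (\<Sum>i<length bl. case bl ! i of (a, b, e, f) \<Rightarrow>
        (if xs ! i then bits_val a else bits_val b) + (if y i then bits_val e else bits_val f)))"

(* For the coins of the current round the prover looks up a winning choice of the existential
   numbers and reveals it block by block, starting from the last block. *)
definition honest_prover :: "bool list \<Rightarrow> block list \<Rightarrow> prover" where
  "honest_prover S bl h = (if honest_choice S bl (round_coins h) (length bl - 1 - round_queries h) then 0 else 1)"

lemma honest_choice_sum: "kg_true S bl \<Longrightarrow> length xs = length bl \<Longrightarrow> bits_val S = univ_sum bl xs + exist_sum bl (honest_choice S bl xs)"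
proof -
  assume kg: "kg_true S bl" and l: "length xs = length bl"
  have "\<exists>y. bits_val S = (\<Sum>i<length bl. case bl ! i of (a, b, e, f) \<Rightarrow>
        (if xs ! i then bits_val a else bits_val b) + (if y i then bits_val e else bits_val f))"
    using kg unfolding kg_true_def by (rule allE[of _ "\<lambda>i. xs ! i"]) simp
  then have "bits_val S = (\<Sum>i<length bl. case bl ! i of (a, b, e, f) \<Rightarrow>
        (if xs ! i then bits_val a else bits_val b) + (if honest_choice S bl xs i then bits_val e else bits_val f))"
    unfolding honest_choice_def by (rule someI_ex)
  also have "\<dots> = univ_sum bl (map (\<lambda>i. xs ! i) [0..<length bl]) + exist_sum bl (honest_choice S bl xs)"
    by (rule kg_sum_split)
  also have "map (\<lambda>i. xs ! i) [0..<length bl] = xs" using l map_nth[of xs] by simp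
  finally show ?thesis .
qed

lemma round_accept_lower:
  assumes w: "w = enc_bits S @ concat (map enc_block bl)" and wf: "wf_instance S bl" and kg: "kg_true S bl"
    and z: "z = real K * 2 ^ length bl"
    and hyp: "round_bound K w (honest_prover S bl) (accs (kg_verifier K)) n B"
  shows "round_bound K w (honest_prover S bl) (accs (kg_verifier K)) (n + (2 * length w + 4))
           (1 / (2 * z + 1) + 2 * z / (2 * z + 1) * B)"
proof -
  define L where "L = 1 / (2 * z + 1) + 2 * z / (2 * z + 1) * B"
  have z0: "0 \<le> z" by (simp add: z)
  have zz: "\<And>i. i \<ge> 5 \<Longrightarrow> enc_cp z 0 i = 0" by (simp add: enc_cp_beyond)
  have AL: "\<forall>h'. L \<le> vreach K w (honest_prover S bl) (accs (kg_verifier K)) (Suc (Suc n)) AccCoin 0 uniform2 (enc_cp 0 0) (enc_cp z 0) h'"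
    using reach_acc_coin_lower[OF hyp z0] by (simp add: L_def kg_verifier_def del: reach.simps)
  have "L \<le> vreach K w (honest_prover S bl) (accs (kg_verifier K)) (Suc (n + (2 * length w + 4))) Start 0 a b zz h"
    if st: "round_start a b zz h" for a b zz h
  proof -
    have "coin_avg (length bl) (\<lambda>_. L) \<le> vreach K w (honest_prover S bl) (accs (kg_verifier K)) (Suc (Suc (Suc n)) + (2 * length w + 2)) Start 0 a b zz h"
    proof (rule reach_round[OF w wf st])
      show "\<forall>xs Y h'. length xs = length bl \<longrightarrow> round_coins h' = xs \<longrightarrow> round_queries h' = length bl \<longrightarrow> answers_follow (honest_prover S bl) (length bl) xs Y \<longrightarrow>
         L \<le> vreach K w (honest_prover S bl) (accs (kg_verifier K)) (Suc (Suc (Suc n))) BwdS 0 uniform2 (enc_cp (real (bits_val S) - real (univ_sum bl xs) - real (exist_sum bl Y)) 0) (enc_cp (real K * 2 ^ length bl) 0) h'"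
      proof (intro allI impI)
        fix xs Y h'
        assume l: "length xs = length bl" and G: "answers_follow (honest_prover S bl) (length bl) xs Y"
        have H: "\<forall>h''. round_coins h'' = xs \<longrightarrow> honest_prover S bl h'' = (if (\<lambda>k. honest_choice S bl xs (length bl - 1 - k)) (round_queries h'') then 0 else 1)"
          by (simp add: honest_prover_def)
        have Yeq: "\<forall>i<length bl. Y i = (\<lambda>k. honest_choice S bl xs (length bl - 1 - k)) (length bl - 1 - i)"
          by (rule G[unfolded answers_follow_def, THEN spec[where x="\<lambda>k. honest_choice S bl xs (length bl - 1 - k)"], THEN mp, OF H])
        have "exist_sum bl Y = exist_sum bl (honest_choice S bl xs)"
          by (rule exist_sum_cong) (use Yeq in auto)
        then have c0: "real (bits_val S) - real (univ_sum bl xs) - real (exist_sum bl Y) = 0"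
          using honest_choice_sum[OF kg l] by simp
        show "L \<le> vreach K w (honest_prover S bl) (accs (kg_verifier K)) (Suc (Suc (Suc n))) BwdS 0 uniform2 (enc_cp (real (bits_val S) - real (univ_sum bl xs) - real (exist_sum bl Y)) 0) (enc_cp (real K * 2 ^ length bl) 0) h'"
          unfolding c0 z[symmetric] by (rule reach_test_pass_lower[OF AL zz])
      qed
    qed
    moreover have "L \<le> coin_avg (length bl) (\<lambda>_. L)" by (rule coin_avg_ge) simp
    moreover have "Suc (n + (2 * length w + 4)) = Suc (Suc (Suc n)) + (2 * length w + 2)" by simp
    ultimately show ?thesis by (simp only:)
  qed
  then show ?thesis unfolding round_bound_def L_def by blast
qed

section \<open>The syntax check\<close>

inductive parses :: "pstate \<Rightarrow> kg_sym list \<Rightarrow> bool" where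
  parses_end: "parses BlkEnd []"
| parses_step: "parse_step d s = Some d' \<Longrightarrow> parses d' u \<Longrightarrow> parses d (s # u)"

lemma reach_Rej: "reach (kg_verifier K) w P (rejs (kg_verifier K)) (Suc n) (to_nat Rej) pos v h = 1"
  by (simp add: kg_verifier_def)

lemma reach_unparsed_reject:
  assumes "\<not> parses d u" "w = pre @ u" "a 0 + a 1 = 1" "d \<noteq> ALP \<longrightarrow> a = uniform2"
  shows "1 \<le> vreach K w P (rejs (kg_verifier K)) (n + length u + 2) (Fwd d x) (Suc (length pre)) a (enc_cp c p) (enc_cp z 0) h"
  using assms
proof (induction u arbitrary: pre d x c p z a h)
  case Nil
  have ne: "d \<noteq> BlkEnd" using Nil.prems(1) parses_end by auto
  have tp: "tape w (Suc (length pre)) = REnd" using Nil.prems(2) tape_end[of w] by simp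
  have nh: "Fwd d x \<noteq> Acc" "Fwd d x \<noteq> Rej" by auto
  have Wq: "weighed_regs (Fwd d x) (tape w (Suc (length pre))) = {}" using tp by (simp add: weighed_regs_def)
  have "vreach K w P (rejs (kg_verifier K)) (Suc (Suc n)) (Fwd d x) (Suc (length pre)) a (enc_cp c p) (enc_cp z 0) h = 1"
    unfolding reach_unweighed_step[OF nh Wq] tp using ne by (simp add: reach_Rej del: reach.simps)
  then show ?case by simp
next
  case (Cons s u)
  have tp: "tape w (Suc (length pre)) = Sym s" using Cons.prems(2) by (simp add: tape_at)
  have nh: "Fwd d x \<noteq> Acc" "Fwd d x \<noteq> Rej" "Fwd d x \<noteq> Start" by auto
  have e: "n + length (s # u) + 2 = Suc (n + length u + 2)" by simp
  have e2: "nat (int (Suc (length pre)) + 1) = Suc (Suc (length pre))" by simp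
  show ?case
  proof (cases "parse_step d s")
    case None
    then have cs: "\<not> flips_coin (Fwd d x) s" by (cases d) (auto split: if_splits)
    have st: "vstep (Fwd d x) (Sym s) (P h) (\<lambda>_. 0) = (Rej, 0)" using None by simp
    have "vreach K w P (rejs (kg_verifier K)) (Suc (n + length u + 2)) (Fwd d x) (Suc (length pre)) a (enc_cp c p) (enc_cp z 0) h = 1"
      using reach_sym_step[where K=K and T="rejs (kg_verifier K)" and n="n + length u + 2" and P=P and h=h and c=c and p=p and zz="enc_cp z 0", OF nh tp cs st Cons.prems(3) enc_cp_beyond] by (simp add: reach_Rej del: reach.simps)
    then show ?thesis unfolding e by (simp del: reach.simps)
  next
    case (Some d')
    have na: "\<not> parses d' u" using Cons.prems(1) Some parses_step by blast
    have w2: "w = (pre @ [s]) @ u" using Cons.prems(2) by simp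
    show ?thesis
    proof (cases "flips_coin (Fwd d x) s")
      case True
      then have dd: "d = S1 \<or> d = BlkEnd" "s = All" by auto
      then have dA: "d' = ALP" using Some by (auto simp: is_bit_def)
      have ah: "a = uniform2" using Cons.prems(4) dd by auto
      have IH: "1 \<le> vreach K w P (rejs (kg_verifier K)) (n + length u + 2) (Fwd d' t) (Suc (length (pre @ [s]))) (basis j) (enc_cp c p) (enc_cp (2 * z) 0) h'" if "j < 2" for t j h'
        by (rule Cons.IH[OF na w2 basis_sum2[OF that]]) (simp add: dA)
      have "vreach K w P (rejs (kg_verifier K)) (Suc (n + length u + 2)) (Fwd d x) (Suc (length pre)) a (enc_cp c p) (enc_cp z 0) h =
        1/2 * vreach K w P (rejs (kg_verifier K)) (n + length u + 2) (Fwd ALP True) (Suc (Suc (length pre))) (basis 0) (enc_cp c p) (enc_cp (2 * z) 0)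
          (h @ [(to_nat (Fwd ALP True), Suc (Suc (length pre)), (\<lambda>_. 0)(0 := 0))]) +
        1/2 * vreach K w P (rejs (kg_verifier K)) (n + length u + 2) (Fwd ALP False) (Suc (Suc (length pre))) (basis 1) (enc_cp c p) (enc_cp (2 * z) 0)
          (h @ [(to_nat (Fwd ALP False), Suc (Suc (length pre)), (\<lambda>_. 0)(0 := 1))])"
        unfolding ah using reach_coin_step[OF dd(1)] tp dd(2) by blast
      moreover have "1 \<le> \<dots>"
        using IH[of 0 True "h @ [(to_nat (Fwd ALP True), Suc (Suc (length pre)), (\<lambda>_. 0)(0 := 0))]"]
              IH[of 1 False "h @ [(to_nat (Fwd ALP False), Suc (Suc (length pre)), (\<lambda>_. 0)(0 := 1))]"] dA
        by (simp del: reach.simps)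
      ultimately show ?thesis unfolding e by (simp del: reach.simps)
    next
      case False
      have st: "vstep (Fwd d x) (Sym s) (P h) (\<lambda>_. 0) = (Fwd d' x, 1)" using Some False by auto
      have "vreach K w P (rejs (kg_verifier K)) (Suc (n + length u + 2)) (Fwd d x) (Suc (length pre)) a (enc_cp c p) (enc_cp z 0) h =
         vreach K w P (rejs (kg_verifier K)) (n + length u + 2) (Fwd d' x) (Suc (Suc (length pre))) uniform2 (enc_cp (fst (counter_op (Fwd d x) s (c, p))) (snd (counter_op (Fwd d x) s (c, p)))) (enc_cp z 0)
           (h @ [(to_nat (Fwd d' x), Suc (Suc (length pre)), \<lambda>_. 0)])"
        using reach_sym_step[where K=K and T="rejs (kg_verifier K)" and n="n + length u + 2" and P=P and h=h and c=c and p=p and zz="enc_cp z 0", OF nh tp False st Cons.prems(3) enc_cp_beyond] unfolding e2 by (simp del: reach.simps)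
      moreover have "1 \<le> \<dots>"
        using Cons.IH[OF na w2 uniform2_sum] by (simp del: reach.simps)
      ultimately show ?thesis unfolding e by (simp del: reach.simps)
    qed
  qed
qed

definition blocks_word :: "kg_sym list \<Rightarrow> bool" where
  "blocks_word u \<longleftrightarrow> (\<exists>bl. u = concat (map enc_block bl) \<and> (\<forall>blk\<in>set bl. block_nonempty blk))"

(* parse_lang d describes the inputs on which the syntax check started in state d ends in BlkEnd;
   TLx is the rest of a block from its number x on. *)
abbreviation "TLf f r \<equiv> enc_bits f @ RP # r"
abbreviation "TLe e f r \<equiv> enc_bits e @ Cm # TLf f r"
abbreviation "TLb b e f r \<equiv> enc_bits b @ RP # Ex # LP # TLe e f r"
abbreviation "TLa a b e f r \<equiv> enc_bits a @ Cm # TLb b e f r"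

fun parse_lang :: "pstate \<Rightarrow> kg_sym list \<Rightarrow> bool" where
  "parse_lang BlkEnd u = blocks_word u"
| "parse_lang Ef2 u = (\<exists>f r. u = TLf f r \<and> blocks_word r)"
| "parse_lang Ef1 u = (\<exists>f r. f \<noteq> [] \<and> u = TLf f r \<and> blocks_word r)"
| "parse_lang Ee2 u = (\<exists>e f r. f \<noteq> [] \<and> u = TLe e f r \<and> blocks_word r)"
| "parse_lang Ee1 u = (\<exists>e f r. e \<noteq> [] \<and> f \<noteq> [] \<and> u = TLe e f r \<and> blocks_word r)"
| "parse_lang ELP u = (\<exists>e f r. e \<noteq> [] \<and> f \<noteq> [] \<and> u = LP # TLe e f r \<and> blocks_word r)"
| "parse_lang EEx u = (\<exists>e f r. e \<noteq> [] \<and> f \<noteq> [] \<and> u = Ex # LP # TLe e f r \<and> blocks_word r)"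
| "parse_lang Ab2 u = (\<exists>b e f r. e \<noteq> [] \<and> f \<noteq> [] \<and> u = TLb b e f r \<and> blocks_word r)"
| "parse_lang Ab1 u = (\<exists>b e f r. b \<noteq> [] \<and> e \<noteq> [] \<and> f \<noteq> [] \<and> u = TLb b e f r \<and> blocks_word r)"
| "parse_lang Aa2 u = (\<exists>a b e f r. b \<noteq> [] \<and> e \<noteq> [] \<and> f \<noteq> [] \<and> u = TLa a b e f r \<and> blocks_word r)"
| "parse_lang Aa1 u = (\<exists>a b e f r. a \<noteq> [] \<and> b \<noteq> [] \<and> e \<noteq> [] \<and> f \<noteq> [] \<and> u = TLa a b e f r \<and> blocks_word r)"
| "parse_lang ALP u = (\<exists>a b e f r. a \<noteq> [] \<and> b \<noteq> [] \<and> e \<noteq> [] \<and> f \<noteq> [] \<and> u = LP # TLa a b e f r \<and> blocks_word r)"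
| "parse_lang S1 u = (\<exists>S a b e f r. a \<noteq> [] \<and> b \<noteq> [] \<and> e \<noteq> [] \<and> f \<noteq> [] \<and> u = enc_bits S @ All # LP # TLa a b e f r \<and> blocks_word r)"
| "parse_lang S0 u = (\<exists>S a b e f r. S \<noteq> [] \<and> a \<noteq> [] \<and> b \<noteq> [] \<and> e \<noteq> [] \<and> f \<noteq> [] \<and> u = enc_bits S @ All # LP # TLa a b e f r \<and> blocks_word r)"

lemma blocks_word_Nil: "blocks_word []" unfolding blocks_word_def by (rule exI[of _ "[]"]) simp

lemma blocks_word_Cons: "a \<noteq> [] \<Longrightarrow> b \<noteq> [] \<Longrightarrow> e \<noteq> [] \<Longrightarrow> f \<noteq> [] \<Longrightarrow> blocks_word r \<Longrightarrow>
   blocks_word (All # LP # TLa a b e f r)"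
proof -
  assume ne: "a \<noteq> []" "b \<noteq> []" "e \<noteq> []" "f \<noteq> []" and "blocks_word r"
  then obtain bl where bl: "r = concat (map enc_block bl)" "\<forall>blk\<in>set bl. block_nonempty blk" unfolding blocks_word_def by blast
  show ?thesis unfolding blocks_word_def
    by (rule exI[of _ "(a, b, e, f) # bl"]) (use ne bl in \<open>simp add: enc_block_eq block_nonempty_def\<close>)
qed

lemma enc_bits_Cons_bit: "is_bit s \<Longrightarrow> s # enc_bits bs @ v = enc_bits ((s = B1) # bs) @ v"
  by (auto simp: is_bit_def enc_bits_def)

lemma parse_lang_step: "parse_step d s = Some d' \<Longrightarrow> parse_lang d' u \<Longrightarrow> parse_lang d (s # u)"
  by (cases d; auto split: if_splits simp: blocks_word_Cons)
    (metis enc_bits_Cons_bit enc_bits_Nil append_Nil list.distinct(1))+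

lemma parses_parse_lang: "parses d u \<Longrightarrow> parse_lang d u"
  by (induction rule: parses.induct) (auto simp: blocks_word_Nil intro: parse_lang_step)

lemma parses_S0: "parses S0 w \<Longrightarrow> \<exists>S bl. w = enc_bits S @ concat (map enc_block bl) \<and> wf_instance S bl"
proof -
  assume "parses S0 w"
  then have "parse_lang S0 w" by (rule parses_parse_lang)
  then obtain S a b e f r where ne: "S \<noteq> []" "a \<noteq> []" "b \<noteq> []" "e \<noteq> []" "f \<noteq> []"
    and w: "w = enc_bits S @ All # LP # TLa a b e f r" and "blocks_word r" by auto
  then obtain bl where bl: "r = concat (map enc_block bl)" "\<forall>blk\<in>set bl. block_nonempty blk" unfolding blocks_word_def by blast
  show ?thesis
    by (rule exI[of _ S], rule exI[of _ "(a, b, e, f) # bl"])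
       (use ne w bl in \<open>simp add: enc_block_eq block_nonempty_def wf_instance_def\<close>)
qed

lemma init_regs_kg_verifier: "init_regs (kg_verifier K) = regs uniform2 (enc_cp 0 0) (enc_cp 0 0)"
proof (rule ext)+
  fix r i
  show "init_regs (kg_verifier K) r i = regs uniform2 (enc_cp 0 0) (enc_cp 0 0) r i"
    by (auto simp: init_regs_def kg_verifier_def regs_def uniform2_def unit4_def enc_cp_def of_rat_divide)
qed

lemma round_start_init: "round_start uniform2 (enc_cp 0 0) (enc_cp 0 0) []"
  by (simp add: round_start_def uniform2_def sum_enc_cp round_coins_def round_queries_def current_round_Nil)

lemma reach_bdd_above: "bdd_above ((\<lambda>n. reach (kg_verifier K) w P T n (to_nat (q::vstate)) pos v h) ` UNIV)"
  by (rule bdd_aboveI[of _ 1]) (auto intro: reach_le_1)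

lemma L_KG_E:
  assumes "w \<in> L_KG"
  obtains S bl where "w = enc_bits S @ concat (map enc_block bl)" "wf_instance S bl" "kg_true S bl"
proof -
  from assms obtain S bl where "w = enc_bits S @ concat (map enc_block bl)" "S \<noteq> []" "bl \<noteq> []"
     "\<forall>(a, b, e, f) \<in> set bl. a \<noteq> [] \<and> b \<noteq> [] \<and> e \<noteq> [] \<and> f \<noteq> []" "kg_true S bl"
    unfolding L_KG_def by blast
  then show ?thesis using that by (auto simp: wf_instance_def block_nonempty_def)
qed

lemma L_KG_I: "w = enc_bits S @ concat (map enc_block bl) \<Longrightarrow> wf_instance S bl \<Longrightarrow> kg_true S bl \<Longrightarrow> w \<in> L_KG"
  unfolding L_KG_def wf_instance_def by (auto simp: block_nonempty_def)

section \<open>Completeness and soundness\<close>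

lemma init_kg_verifier: "init (kg_verifier K) = to_nat Start"
  by (simp add: kg_verifier_def)

lemma le_SUP_reach_of_round_bounds:
  assumes "\<And>k. round_bound K w P T (k * N) (t - t * \<beta> ^ k)" "0 \<le> \<beta>" "\<beta> < 1"
  shows "t \<le> (SUP n. reach (kg_verifier K) w P T n (init (kg_verifier K)) 0 (init_regs (kg_verifier K)) [])"
proof (rule le_SUP_of_geometric_bounds[where g = "\<lambda>k. Suc (k * N)"])
  show "t - t * \<beta> ^ k \<le> reach (kg_verifier K) w P T (Suc (k * N)) (init (kg_verifier K)) 0 (init_regs (kg_verifier K)) []" for k
    using assms(1)[of k] round_start_init
    unfolding round_bound_def init_kg_verifier init_regs_kg_verifier by blast
  show "bdd_above (range (\<lambda>n. reach (kg_verifier K) w P T n (init (kg_verifier K)) 0 (init_regs (kg_verifier K)) []))"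
    unfolding init_kg_verifier by (rule reach_bdd_above)
qed (use assms in auto)

lemma acc_prob_le_1: "acc_prob (kg_verifier K) w P \<le> 1"
  unfolding acc_prob_def init_kg_verifier by (rule cSUP_least) (auto intro: reach_le_1)

lemma kg_verifier_complete:
  assumes "w \<in> L_KG"
  shows "\<exists>P. prover_ok (kg_verifier K) P \<and> acc_prob (kg_verifier K) w P = 1"
proof -
  obtain S bl where w: "w = enc_bits S @ concat (map enc_block bl)" and wf: "wf_instance S bl" and kg: "kg_true S bl"
    using assms by (rule L_KG_E)
  define P where "P = honest_prover S bl"
  define z where "z = real K * 2 ^ length bl"
  define q where "q = 1 / (2 * z + 1)"
  have z0: "0 \<le> z" by (simp add: z_def)
  have q: "0 < q" "q \<le> 1" "2 * z / (2 * z + 1) = 1 - q"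
    using z0 by (auto simp: q_def field_simps)
  have "round_bound K w P (accs (kg_verifier K)) (k * (2 * length w + 4)) (1 - 1 * (1 - q) ^ k)" for k
  proof (rule iterate_affine_bound[where holds = "round_bound K w P (accs (kg_verifier K))"])
    show "round_bound K w P (accs (kg_verifier K)) 0 0"
      unfolding round_bound_def by (auto intro: reach_nonneg)
    show "round_bound K w P (accs (kg_verifier K)) (n + (2 * length w + 4)) (q + (1 - q) * B)"
      if "round_bound K w P (accs (kg_verifier K)) n B" for n B
      using round_accept_lower[OF w wf kg z_def that[unfolded P_def]] q by (simp add: P_def q_def)
  qed (use q in auto)
  then have "1 \<le> acc_prob (kg_verifier K) w P"
    unfolding acc_prob_def by (rule le_SUP_reach_of_round_bounds) (use q in auto)
  moreover have "prover_ok (kg_verifier K) P"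
    by (simp add: prover_ok_def P_def honest_prover_def kg_verifier_def)
  ultimately show ?thesis using acc_prob_le_1[of K w P] by auto
qed

lemma reject_unparsed:
  assumes "\<not> parses S0 w"
  shows "1 \<le> rej_prob (kg_verifier K) w P"
proof -
  let ?R = "\<lambda>n. reach (kg_verifier K) w P (rejs (kg_verifier K)) n (init (kg_verifier K)) 0 (init_regs (kg_verifier K)) []"
  have "?R (Suc (length w + 2)) =
    vreach K w P (rejs (kg_verifier K)) (0 + length w + 2) (Fwd S0 False) (Suc (length ([] :: kg_sym list))) uniform2 (enc_cp 0 0) (enc_cp (real K) 0)
      [(to_nat (Fwd S0 False), 1, \<lambda>_. 0)]"
    using reach_start_step[OF uniform2_sum sum_enc_cp sum_enc_cp, where n = "length w + 2" and h = "[]"]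
    by (simp add: init_kg_verifier init_regs_kg_verifier del: reach.simps)
  also have "1 \<le> \<dots>"
    by (rule reach_unparsed_reject[OF assms]) (simp_all add: uniform2_def)
  finally have "1 \<le> ?R (Suc (length w + 2))" .
  also have "\<dots> \<le> (SUP n. ?R n)"
    unfolding init_kg_verifier by (rule cSUP_upper) (auto intro: reach_bdd_above)
  finally show ?thesis unfolding rej_prob_def .
qed

lemma false_instance_error_bound:
  fixes K e z q r :: real and m :: nat
  assumes "0 < e" "1 \<le> K * e"
    and z_def: "z = K * 2 ^ m" and q_def: "q = 1 / (2 * z + 1)" and r_def: "r = (2/3) / 2 ^ m"
  shows "1 - e \<le> r / (1 - (1 - r) * (1 - q))"
proof -
  have K: "0 < K" using assms(1,2) by (smt (verit) mult_nonpos_nonneg)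
  then have z: "0 < z" by (simp add: z_def)
  have q: "0 < q" "q \<le> 1" using z by (auto simp: q_def)
  have r: "0 < r" "r \<le> 2/3" by (auto simp: r_def field_simps)
  have den: "1 - (1 - r) * (1 - q) = r + q * (1 - r)" by (simp add: algebra_simps)
  have pos: "0 < r + q * (1 - r)" using q r by (simp add: add_pos_nonneg)
  have "1 - r / (1 - (1 - r) * (1 - q)) = q * (1 - r) / (r + q * (1 - r))"
    using pos unfolding den by (simp add: field_simps)
  also have "\<dots> \<le> q / r"
    using q r by (intro frac_le) (auto simp: mult_left_le)
  also have "\<dots> = 3 * 2 ^ m / (2 * (2 * z + 1))" by (simp add: q_def r_def field_simps)
  also have "\<dots> \<le> 3 * 2 ^ m / (4 * z)" using z by (intro divide_left_mono) auto
  also have "\<dots> = 3 / (4 * K)" using K by (simp add: z_def field_simps)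
  also have "\<dots> \<le> e" using assms(1,2) K by (simp add: field_simps)
  finally show ?thesis by simp
qed

lemma reject_false_instance:
  assumes w: "w = enc_bits S @ concat (map enc_block bl)" and wf: "wf_instance S bl" and nk: "\<not> kg_true S bl"
    and "0 < e" "1 \<le> real K * e"
  shows "1 - e \<le> rej_prob (kg_verifier K) w P"
proof -
  define z where "z = real K * 2 ^ length bl"
  define q where "q = 1 / (2 * z + 1)"
  define r :: real where "r = (2/3) / 2 ^ length bl"
  define \<beta> where "\<beta> = (1 - r) * (1 - q)"
  define t where "t = r / (1 - \<beta>)"
  have z0: "0 \<le> z" by (simp add: z_def)
  have q: "0 < q" "q \<le> 1" "2 * z / (2 * z + 1) = 1 - q"
    using z0 by (auto simp: q_def field_simps)
  have r: "0 < r" "r \<le> 2/3" by (auto simp: r_def field_simps)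
  have "\<beta> \<le> 1 - r" unfolding \<beta>_def using q r by (simp add: mult_left_le)
  moreover have "0 \<le> \<beta>" unfolding \<beta>_def using q r by simp
  ultimately have \<beta>: "0 \<le> \<beta>" "\<beta> < 1" "r \<le> 1 - \<beta>" using r by linarith+
  have t: "0 \<le> t" "t \<le> 1" "r + \<beta> * t = t"
    using \<beta> r by (simp_all add: t_def field_simps)
  have "round_bound K w P (rejs (kg_verifier K)) (k * (2 * length w + 4)) (t - t * \<beta> ^ k)" for k
  proof (rule iterate_affine_bound[where holds = "round_bound K w P (rejs (kg_verifier K))"])
    show "round_bound K w P (rejs (kg_verifier K)) 0 0"
      unfolding round_bound_def by (auto intro: reach_nonneg)
    show "round_bound K w P (rejs (kg_verifier K)) (n + (2 * length w + 4)) (r + \<beta> * B)"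
      if "0 \<le> B" "B \<le> t" "round_bound K w P (rejs (kg_verifier K)) n B" for n B
    proof -
      have "(2/3) / 2 ^ length bl + (1 - (2/3) / 2 ^ length bl) * (2 * z / (2 * z + 1) * B) = r + \<beta> * B"
        by (simp only: q(3) r_def \<beta>_def mult.assoc)
      moreover have "B \<le> 1" using that(2) t(2) by linarith
      ultimately show ?thesis using round_reject_lower[OF w wf nk z_def that(1) _ that(3)] by simp
    qed
  qed (use \<beta> t in auto)
  then have "t \<le> rej_prob (kg_verifier K) w P"
    unfolding rej_prob_def by (rule le_SUP_reach_of_round_bounds) (use \<beta> in auto)
  moreover have "1 - e \<le> t"
    unfolding t_def \<beta>_def by (rule false_instance_error_bound[OF assms(4,5) z_def q_def r_def])
  ultimately show ?thesis by simp
qed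

lemma kg_verifier_sound:
  assumes "w \<notin> L_KG" "0 < e" "1 \<le> real K * e"
  shows "1 - e \<le> rej_prob (kg_verifier K) w P"
proof (cases "parses S0 w")
  case True
  then obtain S bl where w: "w = enc_bits S @ concat (map enc_block bl)" and wf: "wf_instance S bl"
    using parses_S0 by blast
  have "\<not> kg_true S bl" using assms(1) L_KG_I[OF w wf] by blast
  then show ?thesis using reject_false_instance[OF w wf _ assms(2,3)] by blast
next
  case False
  then show ?thesis using reject_unparsed[OF False, of K P] assms(2) by linarith
qed

theorem theorem7:
  fixes eps :: rat
  assumes "0 < eps" and "eps < 1/2"
  shows "\<exists>M :: kg_sym adfa. verifies_with_error M L_KG eps \<and> perfect_completeness M L_KG"
proof -
  define K where "K = nat \<lceil>1 / real_of_rat eps\<rceil>"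
  have e: "0 < real_of_rat eps" using assms(1) by simp
  have "1 / real_of_rat eps \<le> real K" unfolding K_def by linarith
  then have K: "1 \<le> real K * real_of_rat eps" using e by (simp add: field_simps)
  have "verifies_with_error (kg_verifier K) L_KG eps"
    unfolding verifies_with_error_def
  proof (intro conjI ballI allI impI)
    fix w assume "w \<in> L_KG"
    then show "\<exists>P. prover_ok (kg_verifier K) P \<and> 1 - real_of_rat eps \<le> acc_prob (kg_verifier K) w P"
      using kg_verifier_complete e by fastforce
  next
    fix w P assume "w \<notin> L_KG"
    then show "1 - real_of_rat eps \<le> rej_prob (kg_verifier K) w P" using e K by (rule kg_verifier_sound)
  qed (rule wf_kg_verifier)
  moreover have "perfect_completeness (kg_verifier K) L_KG"
    unfolding perfect_completeness_def using kg_verifier_complete by blast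
  ultimately show ?thesis by blast
qed

end
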